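(* Let $m,n\ge1$, $\mathbf q=(q_1,\dots,q_m)\in(\mathbb C^* )^m$, and write $\mathbf t=(t_1,\dots,t_m)$, $\bar{\mathbf t}=(q_1t_1,\dots,q_mt_m)$, $\mathbf y=(y_1,\dots,y_n)$. Let $H=(H_1,\dots,H_n)$ be holomorphic at $(\mathbf t,\mathbf y)=(\mathbf 0,\mathbf Y)$ for some $\mathbf Y\in\mathbb C^n$ with $H(\mathbf 0,\mathbf Y)=\mathbf Y$, and suppose no eigenvalue of the Jacobian $D=\big(\frac{\partial H_j}{\partial y_k}(\mathbf 0,\mathbf Y)\big)_{j,k}$ lies in $Q=\{\mathbf q^\alpha:\alpha\in\mathbb N^m\setminus\{0\}\}$. Then the system $y_j(\bar{\mathbf t})=H_j(\mathbf t,\mathbf y(\mathbf t))$ ($1\le j\le n$) has a unique formal power series solution of the form $y_j(\mathbf t)=Y_j+\sum_{\alpha\in\mathbb N^m\setminus\{0\}}b^{(j)}_\alpha\mathbf t^\alpha$. If moreover no eigenvalue of $D$ is a limit point of $Q$, these power series converge in a neighbourhood of $\mathbf t=\mathbf 0$.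
   Context: Multi-index notation: for $\alpha\in\mathbb N^m$, $\mathbf q^\alpha=q_1^{\alpha_1}\cdots q_m^{\alpha_m}$ and $\mathbf t^\alpha=t_1^{\alpha_1}\cdots t_m^{\alpha_m}$. *)

theory Defs
  imports "HOL-Analysis.Analysis"
begin

text \<open>Multi-indices in m variables are functions 'm => nat over a finite index type 'm.
  A formal power series in the variables t_i (i :: 'm) is its coefficient function.\<close>

definition tpow :: "('i::finite \<Rightarrow> complex) \<Rightarrow> ('i \<Rightarrow> nat) \<Rightarrow> complex" where
  "tpow t \<alpha> = (\<Prod>i\<in>UNIV. t i ^ \<alpha> i)"

definition Qset :: "('m::finite \<Rightarrow> complex) \<Rightarrow> complex set" where
  "Qset q = {tpow q \<alpha> | \<alpha>. \<alpha> \<noteq> (\<lambda>_. 0)}"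

text \<open>Power series expansion of a function f of (t, y) around (0, Y):
  f(t,y) = sum over (beta,gamma) of cf beta gamma * t^beta * (y - Y)^gamma,
  absolutely convergent on the polydisc of radius r > 0. (A holomorphic function
  of several complex variables at a point is one having such an expansion; cf
  are its Taylor coefficients.)\<close>
definition power_series_at ::
  "(('m::finite \<Rightarrow> complex) \<Rightarrow> ('n::finite \<Rightarrow> complex) \<Rightarrow> complex)
   \<Rightarrow> (('m \<Rightarrow> nat) \<Rightarrow> ('n \<Rightarrow> nat) \<Rightarrow> complex) \<Rightarrow> ('n \<Rightarrow> complex) \<Rightarrow> real \<Rightarrow> bool" where
  "power_series_at f cf Y r \<longleftrightarrow> r > 0 \<and>
     (\<forall>t y. (\<forall>i. norm (t i) < r) \<and> (\<forall>k. norm (y k - Y k) < r) \<longrightarrow>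
        ((\<lambda>(\<beta>,\<gamma>). cf \<beta> \<gamma> * tpow t \<beta> * tpow (\<lambda>k. y k - Y k) \<gamma>) has_sum f t y) UNIV)"

text \<open>Coefficient of t^alpha in the formal product prod_k (u_k(t))^(gamma_k),
  where u_k are formal power series (Cauchy product written out).\<close>
definition mono_coeff ::
  "('n::finite \<Rightarrow> ('m::finite \<Rightarrow> nat) \<Rightarrow> complex) \<Rightarrow> ('n \<Rightarrow> nat) \<Rightarrow> ('m \<Rightarrow> nat) \<Rightarrow> complex" where
  "mono_coeff u \<gamma> \<alpha> =
     (let S = {(k, i). i < \<gamma> k} in
      \<Sum>\<delta>\<in>{\<delta> \<in> PiE S (\<lambda>_. {\<beta>. \<forall>i. \<beta> i \<le> \<alpha> i}). (\<lambda>i. \<Sum>p\<in>S. \<delta> p i) = \<alpha>}.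
         \<Prod>p\<in>S. u (fst p) (\<delta> p))"

text \<open>Coefficient of t^alpha in the formal substitution
  sum_{beta,gamma} cf beta gamma t^beta u(t)^gamma, for formal series u_k with zero
  constant term (then only finitely many (beta,gamma) contribute, namely those with
  beta <= alpha and |gamma| <= |alpha|).\<close>
definition comp_coeff ::
  "(('m::finite \<Rightarrow> nat) \<Rightarrow> ('n::finite \<Rightarrow> nat) \<Rightarrow> complex)
   \<Rightarrow> ('n \<Rightarrow> ('m \<Rightarrow> nat) \<Rightarrow> complex) \<Rightarrow> ('m \<Rightarrow> nat) \<Rightarrow> complex" where
  "comp_coeff cf u \<alpha> =
     (\<Sum>\<beta>\<in>{\<beta>. \<forall>i. \<beta> i \<le> \<alpha> i}. \<Sum>\<gamma>\<in>{\<gamma>. sum \<gamma> UNIV \<le> sum \<alpha> UNIV}.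
        cf \<beta> \<gamma> * mono_coeff u \<gamma> (\<lambda>i. \<alpha> i - \<beta> i))"

text \<open>b is a formal solution: y_j(t) = Y_j + sum_{alpha<>0} b j alpha t^alpha satisfies
  y_j(q_1 t_1,...,q_m t_m) = H_j(t, y(t)) coefficientwise, where H_j has Taylor
  coefficients c j at (0,Y).\<close>
definition formal_solution ::
  "('m::finite \<Rightarrow> complex) \<Rightarrow> ('n::finite \<Rightarrow> ('m \<Rightarrow> nat) \<Rightarrow> ('n \<Rightarrow> nat) \<Rightarrow> complex)
   \<Rightarrow> ('n \<Rightarrow> complex) \<Rightarrow> ('n \<Rightarrow> ('m \<Rightarrow> nat) \<Rightarrow> complex) \<Rightarrow> bool" where
  "formal_solution q c Y b \<longleftrightarrow>
     (\<forall>j. b j (\<lambda>_. 0) = 0) \<and>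
     (\<forall>j \<alpha>. (if \<alpha> = (\<lambda>_. 0) then Y j else 0) + tpow q \<alpha> * b j \<alpha> = comp_coeff (c j) b \<alpha>)"

definition is_eigenvalue :: "('n::finite \<Rightarrow> 'n \<Rightarrow> complex) \<Rightarrow> complex \<Rightarrow> bool" where
  "is_eigenvalue D \<mu> \<longleftrightarrow> (\<exists>v. v \<noteq> (\<lambda>_. 0) \<and> (\<forall>j. (\<Sum>k\<in>UNIV. D j k * v k) = \<mu> * v j))"

definition jacobian_y ::
  "('n::finite \<Rightarrow> ('m::finite \<Rightarrow> complex) \<Rightarrow> ('n \<Rightarrow> complex) \<Rightarrow> complex) \<Rightarrow> ('n \<Rightarrow> complex)
   \<Rightarrow> 'n \<Rightarrow> 'n \<Rightarrow> complex" where
  "jacobian_y H Y j k = deriv (\<lambda>z. H j (\<lambda>_. 0) (Y(k := z))) (Y k)"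

end

theory Submission
  imports Defs
begin

text \<open>Comparing coefficients of \<open>t^\<alpha>\<close> turns the functional equation into
  \<open>(q^\<alpha> I - D) b_\<alpha> = R_\<alpha>\<close>, where \<open>R_\<alpha>\<close> collects the contributions of all Taylor
  coefficients of \<open>H\<close> other than the constant term and the part linear in \<open>y\<close> at \<open>t = 0\<close>;
  it only involves the \<open>b_\<beta>\<close> with \<open>|\<beta>| < |\<alpha>|\<close>. Non-resonance makes \<open>q^\<alpha> I - D\<close>
  invertible, so the coefficients are determined recursively.

  If no eigenvalue of \<open>D\<close> lies in the closure of \<open>Q\<close>, compactness gives
  \<open>|(w I - D) v| \<ge> \<epsilon> |v|\<close> uniformly for \<open>w \<in> Q\<close>. Together with the Cauchy estimates
  \<open>|c_\<beta>\<gamma>| \<le> M s^(|\<beta>| + |\<gamma>|)\<close>, the truncated majorants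
  \<open>\<Phi>_N = (\<Sum>|\<alpha>| \<le> N. |b_\<alpha>| x^|\<alpha>|)\<close> satisfy \<open>\<Phi>_(N+1) \<le> C (4 (s \<Phi>_N)\<^sup>2 + 2 s x)\<close>,
  because every term of \<open>R_\<alpha>\<close> is at least quadratic in \<open>y\<close> or carries a factor of \<open>t\<close>.
  For small \<open>x\<close> this keeps \<open>\<Phi>_N\<close> bounded, so the coefficients decay geometrically.\<close>

section \<open>Multi-indices\<close>

abbreviation mi_zero :: "'i \<Rightarrow> nat" where
  "mi_zero \<equiv> (\<lambda>_. 0)"

definition mi_single :: "'i \<Rightarrow> nat \<Rightarrow> 'i \<Rightarrow> nat" where
  "mi_single k d = (\<lambda>l. if l = k then d else 0)"

abbreviation mi_unit :: "'i \<Rightarrow> 'i \<Rightarrow> nat" where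
  "mi_unit k \<equiv> mi_single k 1"

abbreviation total_deg :: "('i::finite \<Rightarrow> nat) \<Rightarrow> nat" where
  "total_deg \<alpha> \<equiv> sum \<alpha> UNIV"

abbreviation deg_le :: "nat \<Rightarrow> ('i::finite \<Rightarrow> nat) set" where
  "deg_le N \<equiv> {\<alpha>. total_deg \<alpha> \<le> N}"

abbreviation below :: "('i \<Rightarrow> nat) \<Rightarrow> ('i \<Rightarrow> nat) set" where
  "below \<alpha> \<equiv> {\<beta>. \<forall>i. \<beta> i \<le> \<alpha> i}"

lemma finite_below [simp]: "finite (below (\<alpha> :: 'i::finite \<Rightarrow> nat))"
proof -
  have "below \<alpha> = PiE UNIV (\<lambda>i. {..\<alpha> i})"
    by (auto simp: PiE_def extensional_def)
  then show ?thesis by (simp add: finite_PiE)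
qed

lemma deg_le_subset_below: "deg_le N \<subseteq> below (\<lambda>_::'i::finite. N)"
proof safe
  fix \<alpha> :: "'i \<Rightarrow> nat" and i
  assume "total_deg \<alpha> \<le> N"
  moreover have "\<alpha> i \<le> total_deg \<alpha>"
    by (rule member_le_sum) auto
  ultimately show "\<alpha> i \<le> N" by simp
qed

lemma finite_deg_le [simp]: "finite (deg_le N :: ('i::finite \<Rightarrow> nat) set)"
  by (rule finite_subset[OF deg_le_subset_below finite_below])

lemma total_deg_eq_0_iff: "total_deg \<alpha> = 0 \<longleftrightarrow> \<alpha> = mi_zero"
  by (auto simp: fun_eq_iff)

lemma total_deg_mono: "\<forall>i. \<beta> i \<le> \<alpha> i \<Longrightarrow> total_deg \<beta> \<le> total_deg (\<alpha> :: 'i::finite \<Rightarrow> nat)"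
  by (simp add: sum_mono)

lemma total_deg_diff:
  "\<forall>i. \<beta> i \<le> \<alpha> i \<Longrightarrow> total_deg (\<lambda>i. \<alpha> i - \<beta> i) + total_deg \<beta> = total_deg (\<alpha> :: 'i::finite \<Rightarrow> nat)"
  by (simp add: sum.distrib[symmetric])

lemma total_deg_mi_single [simp]: "total_deg (mi_single k d :: 'i::finite \<Rightarrow> nat) = d"
  unfolding mi_single_def by simp

lemma inj_mi_single: "inj (mi_single k)"
  unfolding mi_single_def inj_def fun_eq_iff by metis

lemma inj_mi_unit: "inj mi_unit"
  unfolding mi_single_def inj_def fun_eq_iff by (metis zero_neq_one)

lemma total_deg_eq_1_imp_unit:
  assumes "total_deg (\<gamma> :: 'i::finite \<Rightarrow> nat) = 1"
  shows "\<gamma> \<in> range mi_unit"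
proof -
  obtain k where k: "\<gamma> k \<noteq> 0"
    using assms total_deg_eq_0_iff by fastforce
  have "total_deg \<gamma> = \<gamma> k + (\<Sum>l\<in>UNIV-{k}. \<gamma> l)"
    by (simp add: sum.remove)
  then have "\<gamma> k = 1" "(\<Sum>l\<in>UNIV-{k}. \<gamma> l) = 0"
    using assms k by linarith+
  then have "\<gamma> = mi_unit k"
    by (auto simp: mi_single_def fun_eq_iff)
  then show ?thesis by blast
qed

lemma two_le_total_deg:
  assumes "\<gamma> \<noteq> mi_zero" "\<gamma> \<notin> range mi_unit"
  shows "2 \<le> total_deg (\<gamma> :: 'i::finite \<Rightarrow> nat)"
proof -
  have "total_deg \<gamma> \<noteq> 0" "total_deg \<gamma> \<noteq> 1"
    using assms total_deg_eq_0_iff total_deg_eq_1_imp_unit by blast+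
  then show ?thesis by linarith
qed

lemma tpow_mi_zero [simp]: "tpow t mi_zero = 1"
  unfolding tpow_def by simp

lemma tpow_const: "tpow (\<lambda>_. c) \<beta> = c ^ total_deg \<beta>"
  unfolding tpow_def by (simp add: power_sum)

lemma tpow_zero: "tpow (\<lambda>_. 0) \<beta> = (if \<beta> = mi_zero then 1 else 0)"
  unfolding tpow_const by (simp add: power_0_left total_deg_eq_0_iff)

lemma tpow_single:
  "tpow (\<lambda>l. if l = k then w else 0) \<gamma> = (if \<gamma> = mi_single k (\<gamma> k) then w ^ \<gamma> k else 0)"
proof (cases "\<gamma> = mi_single k (\<gamma> k)")
  case True
  have "tpow (\<lambda>l. if l = k then w else 0) \<gamma> = (\<Prod>l\<in>UNIV. if l = k then w ^ \<gamma> k else 1)"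
    unfolding tpow_def
  proof (rule prod.cong[OF refl])
    fix l show "(if l = k then w else 0) ^ \<gamma> l = (if l = k then w ^ \<gamma> k else 1)"
      using fun_cong[OF True, of l] by (auto simp: mi_single_def)
  qed
  also have "\<dots> = w ^ \<gamma> k"
    by simp
  finally show ?thesis
    by (simp only: if_P[OF True])
next
  case False
  then obtain l where "l \<noteq> k" "\<gamma> l \<noteq> 0"
  proof -
    obtain l where "\<gamma> l \<noteq> mi_single k (\<gamma> k) l"
      using False by blast
    then show ?thesis
      using that by (cases "l = k") (auto simp: mi_single_def)
  qed
  then have "tpow (\<lambda>l. if l = k then w else 0) \<gamma> = 0"
    unfolding tpow_def by (intro prod_zero bexI[of _ l]) auto
  with False show ?thesis by simp
qed

lemma norm_tpow_le:
  assumes "\<forall>i. norm (t i) \<le> s"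
  shows "norm (tpow t \<alpha>) \<le> s ^ total_deg \<alpha>"
proof -
  have "norm (tpow t \<alpha>) = (\<Prod>i\<in>UNIV. norm (t i) ^ \<alpha> i)"
    unfolding tpow_def by (simp add: prod_norm[symmetric] norm_power)
  also have "\<dots> \<le> (\<Prod>i\<in>UNIV. s ^ \<alpha> i)"
    using assms by (intro prod_mono conjI power_mono) auto
  finally show ?thesis by (simp add: power_sum)
qed

section \<open>Coefficients of products of power series\<close>

text \<open>The product \<open>\<Prod>\<^sub>k u\<^sub>k^\<gamma>\<^sub>k\<close> of \<open>mono_coeff\<close> has one factor per slot \<open>(k, i)\<close>, \<open>i < \<gamma> k\<close>;
  a splitting distributes the exponent \<open>\<alpha>\<close> over the factors.\<close>

definition slots :: "('n::finite \<Rightarrow> nat) \<Rightarrow> ('n \<times> nat) set" where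
  "slots \<gamma> = {(k, i). i < \<gamma> k}"

definition splittings :: "('n::finite \<Rightarrow> nat) \<Rightarrow> ('m::finite \<Rightarrow> nat) \<Rightarrow> ('n \<times> nat \<Rightarrow> 'm \<Rightarrow> nat) set" where
  "splittings \<gamma> \<alpha> = {\<delta> \<in> PiE (slots \<gamma>) (\<lambda>_. below \<alpha>). (\<lambda>i. \<Sum>p\<in>slots \<gamma>. \<delta> p i) = \<alpha>}"

lemma mono_coeff_eq: "mono_coeff u \<gamma> \<alpha> = (\<Sum>\<delta>\<in>splittings \<gamma> \<alpha>. \<Prod>p\<in>slots \<gamma>. u (fst p) (\<delta> p))"
  unfolding mono_coeff_def splittings_def slots_def Let_def by simp

lemma slots_eq_Sigma: "slots \<gamma> = Sigma UNIV (\<lambda>k. {..<\<gamma> k})"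
  unfolding slots_def by auto

lemma finite_slots [simp]: "finite (slots \<gamma>)"
  unfolding slots_eq_Sigma by auto

lemma card_slots: "card (slots \<gamma>) = total_deg \<gamma>"
  unfolding slots_eq_Sigma by (simp add: card_SigmaI)

lemma finite_splittings [simp]: "finite (splittings \<gamma> \<alpha>)"
  unfolding splittings_def
  by (rule finite_subset[of _ "PiE (slots \<gamma>) (\<lambda>_. below \<alpha>)"]) (auto intro: finite_PiE)

lemma splittingsD:
  assumes "\<delta> \<in> splittings \<gamma> \<alpha>"
  shows "\<delta> \<in> PiE (slots \<gamma>) (\<lambda>_. below \<alpha>)"
    and "\<And>i. (\<Sum>p\<in>slots \<gamma>. \<delta> p i) = \<alpha> i"
    and "\<And>p i. p \<in> slots \<gamma> \<Longrightarrow> \<delta> p i \<le> \<alpha> i"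
  using assms unfolding splittings_def by (auto simp: fun_eq_iff)

lemma total_deg_splitting:
  assumes "\<delta> \<in> splittings \<gamma> \<alpha>"
  shows "total_deg \<alpha> = (\<Sum>p\<in>slots \<gamma>. total_deg (\<delta> p))"
proof -
  have "total_deg \<alpha> = (\<Sum>i\<in>UNIV. \<Sum>p\<in>slots \<gamma>. \<delta> p i)"
    using splittingsD(2)[OF assms] by simp
  also have "\<dots> = (\<Sum>p\<in>slots \<gamma>. total_deg (\<delta> p))"
    by (rule sum.swap)
  finally show ?thesis .
qed

lemma mono_coeff_mi_zero:
  fixes u :: "'n::finite \<Rightarrow> ('m::finite \<Rightarrow> nat) \<Rightarrow> complex"
  shows "mono_coeff u mi_zero \<alpha> = (if \<alpha> = mi_zero then 1 else 0)"
proof -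
  have "slots (mi_zero :: 'n::finite \<Rightarrow> nat) = {}"
    unfolding slots_def by auto
  moreover from this have "splittings (mi_zero :: 'n::finite \<Rightarrow> nat) \<alpha> =
      (if \<alpha> = mi_zero then {\<lambda>_. undefined} else {})"
    unfolding splittings_def by (auto simp: fun_eq_iff)
  ultimately show ?thesis
    unfolding mono_coeff_eq by simp
qed

lemma mono_coeff_mi_unit: "mono_coeff u (mi_unit k) \<alpha> = u k \<alpha>"
proof -
  have slots: "slots (mi_unit k) = {(k, 0)}"
    unfolding slots_def mi_single_def by (auto split: if_splits)
  have "splittings (mi_unit k) \<alpha> = {(\<lambda>p. if p = (k, 0) then \<alpha> else undefined)}"
    unfolding splittings_def slots by (auto simp: PiE_def extensional_def fun_eq_iff)
  then show ?thesis
    unfolding mono_coeff_eq slots by simp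
qed

lemma mono_coeff_cong_below:
  assumes "\<And>k \<beta>. \<forall>i. \<beta> i \<le> \<alpha> i \<Longrightarrow> u k \<beta> = u' k \<beta>"
  shows "mono_coeff u \<gamma> \<alpha> = mono_coeff u' \<gamma> \<alpha>"
  unfolding mono_coeff_eq
  using assms splittingsD(3) by (intro sum.cong prod.cong) blast+

text \<open>For a product of at least two series without constant term, each factor carries
  a nonzero part of the degree of \<open>\<alpha>\<close>, so only coefficients of lower degree are involved.\<close>

lemma mono_coeff_cong_lower:
  assumes u0: "\<forall>k. u k mi_zero = 0" and u'0: "\<forall>k. u' k mi_zero = 0"
    and lower: "\<forall>k \<beta>. total_deg \<beta> < total_deg \<alpha> \<longrightarrow> u k \<beta> = u' k \<beta>"
    and two: "2 \<le> total_deg \<gamma>"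
  shows "mono_coeff u \<gamma> \<alpha> = mono_coeff u' \<gamma> \<alpha>"
  unfolding mono_coeff_eq
proof (rule sum.cong[OF refl])
  fix \<delta> assume \<delta>: "\<delta> \<in> splittings \<gamma> \<alpha>"
  show "(\<Prod>p\<in>slots \<gamma>. u (fst p) (\<delta> p)) = (\<Prod>p\<in>slots \<gamma>. u' (fst p) (\<delta> p))"
  proof (cases "\<exists>p\<in>slots \<gamma>. \<delta> p = mi_zero")
    case True
    then show ?thesis
      using u0 u'0 by (metis (no_types, lifting) finite_slots prod_zero)
  next
    case False
    show ?thesis
    proof (rule prod.cong[OF refl])
      fix p assume p: "p \<in> slots \<gamma>"
      have "\<not> slots \<gamma> \<subseteq> {p}"
        using two card_slots[of \<gamma>] card_mono[of "{p}" "slots \<gamma>"] by auto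
      then obtain p' where p': "p' \<in> slots \<gamma>" "p' \<noteq> p"
        by blast
      have "total_deg (\<delta> p) + total_deg (\<delta> p') = (\<Sum>x\<in>{p, p'}. total_deg (\<delta> x))"
        using p' by simp
      also have "\<dots> \<le> (\<Sum>x\<in>slots \<gamma>. total_deg (\<delta> x))"
        using p p' by (intro sum_mono2) auto
      also have "\<dots> = total_deg \<alpha>"
        using total_deg_splitting[OF \<delta>] by simp
      moreover have "total_deg (\<delta> p') \<noteq> 0"
        using False p' total_deg_eq_0_iff by blast
      ultimately have "total_deg (\<delta> p) < total_deg \<alpha>"
        by linarith
      then show "u (fst p) (\<delta> p) = u' (fst p) (\<delta> p)"
        using lower by blast
    qed
  qed
qed

definition mono_majorant :: "(('m::finite \<Rightarrow> nat) \<Rightarrow> real) \<Rightarrow> ('n::finite \<Rightarrow> nat) \<Rightarrow> ('m \<Rightarrow> nat) \<Rightarrow> real" where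
  "mono_majorant P \<gamma> \<alpha> = (\<Sum>\<delta>\<in>splittings \<gamma> \<alpha>. \<Prod>p\<in>slots \<gamma>. P (\<delta> p))"

lemma mono_majorant_nonneg: "(\<And>\<beta>. 0 \<le> P \<beta>) \<Longrightarrow> 0 \<le> mono_majorant P \<gamma> \<alpha>"
  unfolding mono_majorant_def by (intro sum_nonneg prod_nonneg) auto

lemma norm_mono_coeff_le:
  assumes "\<And>k \<beta>. norm (u k \<beta>) \<le> P \<beta>"
  shows "norm (mono_coeff u \<gamma> \<alpha>) \<le> mono_majorant P \<gamma> \<alpha>"
  unfolding mono_coeff_eq mono_majorant_def
  by (rule order.trans[OF norm_sum sum_mono])
    (auto simp: prod_norm[symmetric] intro!: prod_mono assms)

text \<open>The generating-function form of \<open>mono_majorant\<close> is a power of the generating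
  function of \<open>P\<close>; on truncations to degree \<open>\<le> N\<close> this survives as an inequality.\<close>

lemma weighted_sum_mono_majorant_le:
  fixes P :: "('m::finite \<Rightarrow> nat) \<Rightarrow> real" and \<gamma> :: "'n::finite \<Rightarrow> nat"
  assumes x: "0 \<le> x" and P: "\<And>\<beta>. 0 \<le> P \<beta>"
  shows "(\<Sum>\<alpha>\<in>deg_le N. x ^ total_deg \<alpha> * mono_majorant P \<gamma> \<alpha>)
          \<le> (\<Sum>\<beta>\<in>deg_le N. P \<beta> * x ^ total_deg \<beta>) ^ total_deg \<gamma>"
proof -
  let ?A = "deg_le N :: ('m \<Rightarrow> nat) set"
  let ?F = "\<lambda>\<delta>. \<Prod>p\<in>slots \<gamma>. P (\<delta> p) * x ^ total_deg (\<delta> p)"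
  have "(\<Sum>\<alpha>\<in>?A. x ^ total_deg \<alpha> * mono_majorant P \<gamma> \<alpha>) = (\<Sum>\<alpha>\<in>?A. \<Sum>\<delta>\<in>splittings \<gamma> \<alpha>. ?F \<delta>)"
    unfolding mono_majorant_def sum_distrib_left
    by (intro sum.cong refl)
      (simp add: total_deg_splitting power_sum prod.distrib[symmetric] mult.commute)
  also have "\<dots> = (\<Sum>z\<in>Sigma ?A (splittings \<gamma>). ?F (snd z))"
    by (subst sum.Sigma) (simp_all add: split_beta)
  also have "\<dots> \<le> (\<Sum>\<delta>\<in>PiE (slots \<gamma>) (\<lambda>_. ?A). ?F \<delta>)"
  proof (rule sum_le_included[where i = "\<lambda>\<delta>. ((\<lambda>i. \<Sum>p\<in>slots \<gamma>. \<delta> p i), \<delta>)"])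
    show "finite (Sigma ?A (splittings \<gamma>))" "finite (PiE (slots \<gamma>) (\<lambda>_. ?A))"
      by (auto intro: finite_PiE)
    show "\<forall>y\<in>PiE (slots \<gamma>) (\<lambda>_. ?A). 0 \<le> ?F y"
      using P x by (auto intro!: prod_nonneg)
    show "\<forall>z\<in>Sigma ?A (splittings \<gamma>). \<exists>y\<in>PiE (slots \<gamma>) (\<lambda>_. ?A).
        ((\<lambda>i. \<Sum>p\<in>slots \<gamma>. y p i), y) = z \<and> ?F (snd z) \<le> ?F y"
    proof
      fix z assume "z \<in> Sigma ?A (splittings \<gamma>)"
      then obtain \<alpha> \<delta> where z: "z = (\<alpha>, \<delta>)" "total_deg \<alpha> \<le> N" "\<delta> \<in> splittings \<gamma> \<alpha>"
        by auto
      have "below \<alpha> \<subseteq> ?A"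
        using z(2) total_deg_mono by (auto intro: order.trans)
      then have "\<delta> \<in> PiE (slots \<gamma>) (\<lambda>_. ?A)"
        using splittingsD(1)[OF z(3)] PiE_mono by blast
      moreover have "(\<lambda>i. \<Sum>p\<in>slots \<gamma>. \<delta> p i) = \<alpha>"
        using splittingsD(2)[OF z(3)] by auto
      ultimately show "\<exists>y\<in>PiE (slots \<gamma>) (\<lambda>_. ?A).
          ((\<lambda>i. \<Sum>p\<in>slots \<gamma>. y p i), y) = z \<and> ?F (snd z) \<le> ?F y"
        using z(1) by auto
    qed
  qed
  also have "\<dots> = (\<Prod>p\<in>slots \<gamma>. \<Sum>\<beta>\<in>?A. P \<beta> * x ^ total_deg \<beta>)"
    by (rule prod_sum_PiE[symmetric]) auto
  also have "\<dots> = (\<Sum>\<beta>\<in>?A. P \<beta> * x ^ total_deg \<beta>) ^ total_deg \<gamma>"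
    by (simp add: card_slots)
  finally show ?thesis .
qed

section \<open>Coefficients of the composition\<close>

text \<open>The constant term and the terms linear in \<open>y\<close> at \<open>t = 0\<close> are the only ones that are not of
  lower order in the recursion; they are split off from the remainder.\<close>

definition affine_index :: "('m \<Rightarrow> nat) \<Rightarrow> ('n \<Rightarrow> nat) \<Rightarrow> bool" where
  "affine_index \<beta> \<gamma> \<longleftrightarrow> \<beta> = mi_zero \<and> (\<gamma> = mi_zero \<or> \<gamma> \<in> range mi_unit)"

definition remainder_coeff :: "(('m::finite \<Rightarrow> nat) \<Rightarrow> ('n::finite \<Rightarrow> nat) \<Rightarrow> complex)
   \<Rightarrow> ('n \<Rightarrow> ('m \<Rightarrow> nat) \<Rightarrow> complex) \<Rightarrow> ('m \<Rightarrow> nat) \<Rightarrow> complex" where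
  "remainder_coeff cf u \<alpha> = (\<Sum>\<beta>\<in>below \<alpha>. \<Sum>\<gamma>\<in>deg_le (total_deg \<alpha>).
     if affine_index \<beta> \<gamma> then 0 else cf \<beta> \<gamma> * mono_coeff u \<gamma> (\<lambda>i. \<alpha> i - \<beta> i))"

lemma comp_coeff_mi_zero:
  fixes cf :: "('m::finite \<Rightarrow> nat) \<Rightarrow> ('n::finite \<Rightarrow> nat) \<Rightarrow> complex"
  shows "comp_coeff cf u mi_zero = cf mi_zero mi_zero"
proof -
  have "below (mi_zero :: 'm \<Rightarrow> nat) = {mi_zero}"
    by auto
  moreover have "deg_le (total_deg (mi_zero :: 'm \<Rightarrow> nat)) = {mi_zero :: 'n \<Rightarrow> nat}"
    using total_deg_eq_0_iff by auto
  ultimately show ?thesis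
    unfolding comp_coeff_def by (simp add: mono_coeff_mi_zero)
qed

lemma comp_coeff_eq_remainder_coeff:
  fixes cf :: "('m::finite \<Rightarrow> nat) \<Rightarrow> ('n::finite \<Rightarrow> nat) \<Rightarrow> complex"
  assumes \<alpha>: "\<alpha> \<noteq> mi_zero"
  shows "comp_coeff cf u \<alpha> = remainder_coeff cf u \<alpha> + (\<Sum>k\<in>UNIV. cf mi_zero (mi_unit k) * u k \<alpha>)"
proof -
  let ?B = "below \<alpha>" and ?G = "deg_le (total_deg \<alpha>) :: ('n \<Rightarrow> nat) set"
  let ?T = "\<lambda>\<beta> \<gamma>. cf \<beta> \<gamma> * mono_coeff u \<gamma> (\<lambda>i. \<alpha> i - \<beta> i)"
  have "comp_coeff cf u \<alpha> = remainder_coeff cf u \<alpha> +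
      (\<Sum>\<beta>\<in>?B. \<Sum>\<gamma>\<in>?G. if affine_index \<beta> \<gamma> then ?T \<beta> \<gamma> else 0)"
    unfolding comp_coeff_def remainder_coeff_def sum.distrib[symmetric]
    by (intro sum.cong) auto
  also have "(\<Sum>\<beta>\<in>?B. \<Sum>\<gamma>\<in>?G. if affine_index \<beta> \<gamma> then ?T \<beta> \<gamma> else 0)
      = (\<Sum>\<beta>\<in>?B. if \<beta> = mi_zero then \<Sum>\<gamma>\<in>?G. if \<gamma> \<in> range mi_unit then ?T mi_zero \<gamma> else 0 else 0)"
  proof (intro sum.cong refl)
    fix \<beta> :: "'m \<Rightarrow> nat"
    have "?T mi_zero mi_zero = 0"
      using \<alpha> by (simp add: mono_coeff_mi_zero)
    then show "(\<Sum>\<gamma>\<in>?G. if affine_index \<beta> \<gamma> then ?T \<beta> \<gamma> else 0) =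
        (if \<beta> = mi_zero then \<Sum>\<gamma>\<in>?G. if \<gamma> \<in> range mi_unit then ?T mi_zero \<gamma> else 0 else 0)"
      unfolding affine_index_def by (auto intro!: sum.cong)
  qed
  also have "\<dots> = (\<Sum>\<gamma>\<in>?G. if \<gamma> \<in> range mi_unit then ?T mi_zero \<gamma> else 0)"
    by (subst sum.delta) auto
  also have "\<dots> = (\<Sum>\<gamma>\<in>?G \<inter> range mi_unit. ?T mi_zero \<gamma>)"
    by (subst sum.inter_restrict) auto
  also have "?G \<inter> range mi_unit = range mi_unit"
  proof -
    have "total_deg \<alpha> \<noteq> 0"
      using \<alpha> total_deg_eq_0_iff by blast
    then have "mi_unit k \<in> ?G" for k
      by (simp only: mem_Collect_eq total_deg_mi_single)
    then show ?thesis by auto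
  qed
  also have "(\<Sum>\<gamma>\<in>range mi_unit. ?T mi_zero \<gamma>) = (\<Sum>k\<in>UNIV. cf mi_zero (mi_unit k) * u k \<alpha>)"
    by (subst sum.reindex[OF inj_mi_unit]) (simp only: comp_def mono_coeff_mi_unit diff_zero)
  finally show ?thesis .
qed

lemma remainder_coeff_cong_lower:
  assumes u0: "\<forall>k. u k mi_zero = 0" and u'0: "\<forall>k. u' k mi_zero = 0"
    and lower: "\<forall>k \<beta>. total_deg \<beta> < total_deg \<alpha> \<longrightarrow> u k \<beta> = u' k \<beta>"
  shows "remainder_coeff cf u \<alpha> = remainder_coeff cf u' \<alpha>"
  unfolding remainder_coeff_def
proof (intro sum.cong refl)
  fix \<beta> \<gamma> assume \<beta>: "\<beta> \<in> below \<alpha>"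
  show "(if affine_index \<beta> \<gamma> then 0 else cf \<beta> \<gamma> * mono_coeff u \<gamma> (\<lambda>i. \<alpha> i - \<beta> i)) =
        (if affine_index \<beta> \<gamma> then 0 else cf \<beta> \<gamma> * mono_coeff u' \<gamma> (\<lambda>i. \<alpha> i - \<beta> i))"
  proof (cases "affine_index \<beta> \<gamma>")
    case nonaffine: False
    show ?thesis
    proof (cases "\<beta> = mi_zero")
      case True
      with nonaffine have "2 \<le> total_deg \<gamma>"
        by (intro two_le_total_deg) (auto simp: affine_index_def)
      then have "mono_coeff u \<gamma> \<alpha> = mono_coeff u' \<gamma> \<alpha>"
        using u0 u'0 lower by (intro mono_coeff_cong_lower) auto
      with True show ?thesis by simp
    next
      case False
      then have "total_deg \<beta> \<noteq> 0"
        using total_deg_eq_0_iff by blast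
      moreover have "total_deg (\<lambda>i. \<alpha> i - \<beta> i) + total_deg \<beta> = total_deg \<alpha>"
        using \<beta> total_deg_diff by auto
      ultimately have "total_deg \<beta>' < total_deg \<alpha>" if "\<forall>i. \<beta>' i \<le> \<alpha> i - \<beta> i" for \<beta>'
        using total_deg_mono[OF that] by linarith
      then have "mono_coeff u \<gamma> (\<lambda>i. \<alpha> i - \<beta> i) = mono_coeff u' \<gamma> (\<lambda>i. \<alpha> i - \<beta> i)"
        using lower by (intro mono_coeff_cong_below) blast
      then show ?thesis by simp
    qed
  qed simp
qed

section \<open>The shifted linear part\<close>

lemma ex1_solution_if_not_eigenvalue:
  fixes D :: "'n::finite \<Rightarrow> 'n \<Rightarrow> complex"
  assumes "\<not> is_eigenvalue D \<mu>"
  shows "\<exists>!v. \<forall>j. \<mu> * v j - (\<Sum>k\<in>UNIV. D j k * v k) = R j"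
proof -
  define f :: "complex^'n \<Rightarrow> complex^'n" where
    "f x = (\<chi> j. \<mu> * x$j - (\<Sum>k\<in>UNIV. D j k * x$k))" for x
  have lin: "linear f"
    by (rule linearI) (simp_all add: f_def vec_eq_iff algebra_simps sum.distrib
        scaleR_right_diff_distrib scaleR_sum_right)
  have "x = 0" if "f x = 0" for x
  proof (rule ccontr)
    assume "x \<noteq> 0"
    then have "(\<lambda>k. x$k) \<noteq> (\<lambda>_. 0)"
      by (simp add: vec_eq_iff fun_eq_iff)
    moreover have "\<forall>j. (\<Sum>k\<in>UNIV. D j k * x$k) = \<mu> * x$j"
      using that unfolding f_def by (simp add: vec_eq_iff)
    ultimately show False
      using assms unfolding is_eigenvalue_def by blast
  qed
  then have inj: "inj f"
    by (metis (no_types, lifting) injI lin linear_diff right_minus_eq)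
  then obtain x where x: "f x = (\<chi> j. R j)"
    using linear_inj_imp_surj[OF lin] by (metis surjD)
  show ?thesis
  proof (rule ex1I[of _ "\<lambda>k. x$k"])
    show "\<forall>j. \<mu> * x$j - (\<Sum>k\<in>UNIV. D j k * x$k) = R j"
      using x unfolding f_def by (simp add: vec_eq_iff)
  next
    fix v assume "\<forall>j. \<mu> * v j - (\<Sum>k\<in>UNIV. D j k * v k) = R j"
    then have "f (\<chi> k. v k) = f x"
      using x unfolding f_def by (simp add: vec_eq_iff)
    then show "v = (\<lambda>k. x$k)"
      using inj by (auto simp: vec_eq_iff dest: injD)
  qed
qed

definition l1_norm :: "('n::finite \<Rightarrow> complex) \<Rightarrow> real" where
  "l1_norm v = (\<Sum>j\<in>UNIV. norm (v j))"

definition shifted_norm :: "('n::finite \<Rightarrow> 'n \<Rightarrow> complex) \<Rightarrow> complex \<Rightarrow> ('n \<Rightarrow> complex) \<Rightarrow> real" where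
  "shifted_norm D w v = l1_norm (\<lambda>j. w * v j - (\<Sum>k\<in>UNIV. D j k * v k))"

lemma l1_norm_nonneg: "0 \<le> l1_norm v"
  unfolding l1_norm_def by (simp add: sum_nonneg)

lemma l1_norm_eq_0_iff: "l1_norm v = 0 \<longleftrightarrow> v = (\<lambda>_. 0)"
  unfolding l1_norm_def by (simp add: sum_nonneg_eq_0_iff fun_eq_iff)

lemma shifted_norm_nonneg: "0 \<le> shifted_norm D w v"
  unfolding shifted_norm_def by (rule l1_norm_nonneg)

lemma shifted_norm_scale:
  assumes "0 < s"
  shows "shifted_norm D w (\<lambda>j. v j / of_real s) = shifted_norm D w v / s"
proof -
  have "w * (v j / of_real s) - (\<Sum>k\<in>UNIV. D j k * (v k / of_real s))
      = (w * v j - (\<Sum>k\<in>UNIV. D j k * v k)) / of_real s" for j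
    by (simp add: diff_divide_distrib sum_divide_distrib)
  then show ?thesis
    unfolding shifted_norm_def l1_norm_def using assms by (simp add: norm_divide sum_divide_distrib)
qed

lemma shifted_norm_eq_0_iff:
  "shifted_norm D w v = 0 \<longleftrightarrow> (\<forall>j. (\<Sum>k\<in>UNIV. D j k * v k) = w * v j)"
  unfolding shifted_norm_def l1_norm_eq_0_iff by (auto simp: fun_eq_iff)

lemma l1_norm_le_shifted_norm_if_large:
  assumes "(\<Sum>j\<in>UNIV. \<Sum>k\<in>UNIV. norm (D j k)) + 1 \<le> norm w"
  shows "l1_norm v \<le> shifted_norm D w v"
proof -
  let ?s = "l1_norm v" and ?D = "\<Sum>j\<in>UNIV. \<Sum>k\<in>UNIV. norm (D j k)"
  have "norm w * norm (v j) - (\<Sum>k\<in>UNIV. norm (D j k) * ?s)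
      \<le> norm (w * v j - (\<Sum>k\<in>UNIV. D j k * v k))" for j
  proof -
    have "norm (\<Sum>k\<in>UNIV. D j k * v k) \<le> (\<Sum>k\<in>UNIV. norm (D j k) * norm (v k))"
      by (rule order.trans[OF norm_sum]) (simp add: norm_mult)
    also have "\<dots> \<le> (\<Sum>k\<in>UNIV. norm (D j k) * ?s)"
      unfolding l1_norm_def by (intro sum_mono mult_left_mono member_le_sum) auto
    finally show ?thesis
      using norm_triangle_ineq2[of "w * v j" "\<Sum>k\<in>UNIV. D j k * v k"] by (simp add: norm_mult)
  qed
  then have "(\<Sum>j\<in>UNIV. norm w * norm (v j) - (\<Sum>k\<in>UNIV. norm (D j k) * ?s)) \<le> shifted_norm D w v"
    unfolding shifted_norm_def l1_norm_def by (rule sum_mono)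
  moreover have "(\<Sum>j\<in>UNIV. norm w * norm (v j) - (\<Sum>k\<in>UNIV. norm (D j k) * ?s)) = (norm w - ?D) * ?s"
    by (simp add: l1_norm_def sum_subtractf sum_distrib_left sum_distrib_right algebra_simps)
  moreover have "?s \<le> (norm w - ?D) * ?s"
    using assms l1_norm_nonneg[of v] by (simp add: mult_le_cancel_right1)
  ultimately show ?thesis by linarith
qed

lemma shifted_norm_ge_if_ge_on_unit_sphere:
  assumes "\<And>v. l1_norm v = 1 \<Longrightarrow> \<epsilon> \<le> shifted_norm D w v"
  shows "\<epsilon> * l1_norm v \<le> shifted_norm D w v"
proof (cases "l1_norm v = 0")
  case False
  let ?s = "l1_norm v"
  have s: "0 < ?s"
    using False l1_norm_nonneg[of v] by linarith
  have "l1_norm (\<lambda>j. v j / of_real ?s) = 1"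
    using s unfolding l1_norm_def by (simp add: norm_divide sum_divide_distrib[symmetric] del: of_real_sum)
  then have "\<epsilon> \<le> shifted_norm D w (\<lambda>j. v j / of_real ?s)"
    by (rule assms)
  then show ?thesis
    using s by (simp add: shifted_norm_scale field_simps)
qed (simp add: shifted_norm_nonneg)

text \<open>On a compact set free of eigenvalues the continuous function \<open>(w, v) \<mapsto> shifted_norm D w v\<close>
  has a positive minimum on the \<open>\<ell>\<^sup>1\<close> unit sphere.\<close>

lemma compact_shifted_norm_lower_bound:
  fixes D :: "'n::finite \<Rightarrow> 'n \<Rightarrow> complex"
  assumes W: "compact W" and no_ev: "\<And>w. w \<in> W \<Longrightarrow> \<not> is_eigenvalue D w"
  shows "\<exists>\<epsilon>>0. \<forall>w\<in>W. \<forall>v. \<epsilon> * l1_norm v \<le> shifted_norm D w v"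
proof -
  define S where "S = {x::complex^'n. l1_norm (\<lambda>j. x$j) = 1}"
  define G where "G p = shifted_norm D (fst p) (\<lambda>j. snd p $ j)" for p :: "complex \<times> (complex^'n)"
  have cont_l1: "continuous_on UNIV (\<lambda>x::complex^'n. l1_norm (\<lambda>j. x$j))"
    unfolding l1_norm_def by (intro continuous_intros)
  have "closed S"
    unfolding S_def by (rule closed_Collect_eq[OF cont_l1 continuous_on_const])
  moreover have "S \<subseteq> cball 0 1"
  proof
    fix x assume "x \<in> S"
    moreover have "norm x \<le> l1_norm (\<lambda>j. x$j)"
      unfolding norm_vec_def l1_norm_def by (rule L2_set_le_sum) auto
    ultimately show "x \<in> cball 0 1" unfolding S_def by simp
  qed
  ultimately have compK: "compact (W \<times> S)"
    using W compact_Times compact_eq_bounded_closed bounded_subset[OF bounded_cball] by metis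
  have "continuous_on (W \<times> S) G"
    unfolding G_def shifted_norm_def l1_norm_def
    by (intro continuous_intros continuous_on_compose2[OF continuous_on_id]
        bounded_linear.continuous_on[OF bounded_linear_vec_nth]) auto
  have pos: "0 < G p" if p_in: "p \<in> W \<times> S" for p
  proof -
    obtain w x where p: "p = (w, x)" "w \<in> W" "l1_norm (\<lambda>j. x$j) = 1"
      using p_in by (cases p) (auto simp: S_def)
    then have "(\<lambda>j. x$j) \<noteq> (\<lambda>_. 0)"
      using l1_norm_eq_0_iff[of "\<lambda>j. x$j"] by auto
    then have "G p \<noteq> 0"
      using no_ev[OF p(2)] unfolding G_def p(1) shifted_norm_eq_0_iff is_eigenvalue_def by auto
    then show ?thesis
      using shifted_norm_nonneg[of D "fst p" "\<lambda>j. snd p $ j"] unfolding G_def by linarith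
  qed
  obtain \<epsilon> where \<epsilon>: "0 < \<epsilon>" "\<forall>p\<in>W \<times> S. \<epsilon> \<le> G p"
  proof (cases "W \<times> S = {}")
    case False
    then obtain p0 where "p0 \<in> W \<times> S" "\<forall>p\<in>W \<times> S. G p0 \<le> G p"
      using continuous_attains_inf[OF compK False \<open>continuous_on (W \<times> S) G\<close>] by blast
    then show ?thesis using that pos by blast
  qed (use that[of 1] in auto)
  have "\<epsilon> \<le> shifted_norm D w v" if "w \<in> W" "l1_norm v = 1" for w v
    using \<epsilon>(2)[rule_format, of "(w, \<chi> j. v j)"] that unfolding S_def G_def
    by (simp add: vec_lambda_inverse)
  then show ?thesis
    using \<epsilon>(1) shifted_norm_ge_if_ge_on_unit_sphere by blast
qed

lemma shifted_norm_uniform_lower_bound: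
  fixes D :: "'n::finite \<Rightarrow> 'n \<Rightarrow> complex"
  assumes "\<And>\<mu>. is_eigenvalue D \<mu> \<Longrightarrow> \<mu> \<notin> closure Q"
  shows "\<exists>\<epsilon>>0. \<forall>w\<in>Q. \<forall>v. \<epsilon> * l1_norm v \<le> shifted_norm D w v"
proof -
  define R where "R = (\<Sum>j\<in>UNIV. \<Sum>k\<in>UNIV. norm (D j k)) + 1"
  obtain \<epsilon> where \<epsilon>: "0 < \<epsilon>" "\<forall>w\<in>closure Q \<inter> cball 0 R. \<forall>v. \<epsilon> * l1_norm v \<le> shifted_norm D w v"
    using compact_shifted_norm_lower_bound[of "closure Q \<inter> cball 0 R" D] assms
    by (metis Int_iff closed_Int_compact closed_closure compact_cball)
  have "min \<epsilon> 1 * l1_norm v \<le> shifted_norm D w v" if "w \<in> Q" for w v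
  proof (cases "norm w \<le> R")
    case True
    then have "\<epsilon> * l1_norm v \<le> shifted_norm D w v"
      using \<epsilon>(2) that closure_subset by fastforce
    moreover have "min \<epsilon> 1 * l1_norm v \<le> \<epsilon> * l1_norm v"
      by (intro mult_right_mono l1_norm_nonneg) simp
    ultimately show ?thesis by linarith
  next
    case False
    then have "l1_norm v \<le> shifted_norm D w v"
      unfolding R_def by (intro l1_norm_le_shifted_norm_if_large) auto
    moreover have "min \<epsilon> 1 * l1_norm v \<le> 1 * l1_norm v"
      by (intro mult_right_mono l1_norm_nonneg) simp
    ultimately show ?thesis by linarith
  qed
  then show ?thesis
    using \<epsilon>(1) by (intro exI[of _ "min \<epsilon> 1"]) auto
qed

section \<open>Existence and uniqueness of the formal solution\<close>

definition linear_part :: "('n \<Rightarrow> ('m \<Rightarrow> nat) \<Rightarrow> ('n \<Rightarrow> nat) \<Rightarrow> complex) \<Rightarrow> 'n \<Rightarrow> 'n \<Rightarrow> complex" where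
  "linear_part c j k = c j mi_zero (mi_unit k)"

definition solves_recursion ::
  "('m::finite \<Rightarrow> complex) \<Rightarrow> ('n::finite \<Rightarrow> ('m \<Rightarrow> nat) \<Rightarrow> ('n \<Rightarrow> nat) \<Rightarrow> complex)
   \<Rightarrow> ('n \<Rightarrow> ('m \<Rightarrow> nat) \<Rightarrow> complex) \<Rightarrow> bool" where
  "solves_recursion q c b \<longleftrightarrow> (\<forall>j. b j mi_zero = 0) \<and>
     (\<forall>\<alpha> j. \<alpha> \<noteq> mi_zero \<longrightarrow>
        tpow q \<alpha> * b j \<alpha> - (\<Sum>k\<in>UNIV. linear_part c j k * b k \<alpha>) = remainder_coeff (c j) b \<alpha>)"

lemma formal_solution_iff_solves_recursion:
  assumes "\<And>j. c j mi_zero mi_zero = Y j"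
  shows "formal_solution q c Y b \<longleftrightarrow> solves_recursion q c b"
proof -
  have "tpow q \<alpha> * b j \<alpha> = comp_coeff (c j) b \<alpha> \<longleftrightarrow>
      tpow q \<alpha> * b j \<alpha> - (\<Sum>k\<in>UNIV. linear_part c j k * b k \<alpha>) = remainder_coeff (c j) b \<alpha>"
    if "\<alpha> \<noteq> mi_zero" for \<alpha> j
    using comp_coeff_eq_remainder_coeff[OF that, of "c j" b] unfolding linear_part_def
    by (auto simp: algebra_simps)
  moreover have "Y j + tpow q mi_zero * b j mi_zero = comp_coeff (c j) b mi_zero \<longleftrightarrow> b j mi_zero = 0" for j
    using assms by (simp add: comp_coeff_mi_zero)
  ultimately have eqv: "(if \<alpha> = mi_zero then Y j else 0) + tpow q \<alpha> * b j \<alpha> = comp_coeff (c j) b \<alpha> \<longleftrightarrow>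
      (if \<alpha> = mi_zero then b j mi_zero = 0 else
        tpow q \<alpha> * b j \<alpha> - (\<Sum>k\<in>UNIV. linear_part c j k * b k \<alpha>) = remainder_coeff (c j) b \<alpha>)" for \<alpha> j
    by (cases "\<alpha> = mi_zero") simp_all
  show ?thesis
    unfolding formal_solution_def solves_recursion_def eqv by auto
qed

text \<open>The coefficients of degree \<open>Suc N\<close> solve the linear system of \<open>solves_recursion\<close>, whose
  right-hand side only involves the lower degrees computed before; under non-resonance the
  \<open>THE\<close> is well defined.\<close>

primrec approx_solution ::
  "('m::finite \<Rightarrow> complex) \<Rightarrow> ('n::finite \<Rightarrow> ('m \<Rightarrow> nat) \<Rightarrow> ('n \<Rightarrow> nat) \<Rightarrow> complex)
   \<Rightarrow> nat \<Rightarrow> 'n \<Rightarrow> ('m \<Rightarrow> nat) \<Rightarrow> complex" where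
  "approx_solution q c 0 = (\<lambda>j \<alpha>. 0)"
| "approx_solution q c (Suc N) = (\<lambda>j \<alpha>.
    if total_deg \<alpha> = Suc N then
      (THE v. \<forall>j. tpow q \<alpha> * v j - (\<Sum>k\<in>UNIV. linear_part c j k * v k)
                  = remainder_coeff (c j) (approx_solution q c N) \<alpha>) j
    else approx_solution q c N j \<alpha>)"

lemma approx_solution_stable:
  "total_deg \<alpha> \<le> N \<Longrightarrow> approx_solution q c N j \<alpha> = approx_solution q c (total_deg \<alpha>) j \<alpha>"
proof (induction N)
  case (Suc N)
  then show ?case
    by (cases "total_deg \<alpha> = Suc N") simp_all
qed simp

lemma solves_recursion_unique_coeff:
  fixes b b' :: "'n::finite \<Rightarrow> ('m::finite \<Rightarrow> nat) \<Rightarrow> complex"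
  assumes ne: "\<not> is_eigenvalue (linear_part c) (tpow q \<alpha>)" and \<alpha>: "\<alpha> \<noteq> mi_zero"
    and b: "solves_recursion q c b" and b': "solves_recursion q c b'"
    and lower: "\<forall>k \<beta>. total_deg \<beta> < total_deg \<alpha> \<longrightarrow> b k \<beta> = b' k \<beta>"
  shows "b j \<alpha> = b' j \<alpha>"
proof -
  let ?P = "\<lambda>v. \<forall>j. tpow q \<alpha> * v j - (\<Sum>k\<in>UNIV. linear_part c j k * v k) = remainder_coeff (c j) b \<alpha>"
  have ex1: "\<exists>!v. ?P v"
    by (rule ex1_solution_if_not_eigenvalue[OF ne])
  have "remainder_coeff (c j) b' \<alpha> = remainder_coeff (c j) b \<alpha>" for j
    using b b' lower unfolding solves_recursion_def by (intro remainder_coeff_cong_lower) simp_all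
  moreover have "\<forall>j. tpow q \<alpha> * b' j \<alpha> - (\<Sum>k\<in>UNIV. linear_part c j k * b' k \<alpha>) = remainder_coeff (c j) b' \<alpha>"
    using b' \<alpha> unfolding solves_recursion_def by blast
  ultimately have "?P (\<lambda>k. b' k \<alpha>)"
    by simp
  moreover have "?P (\<lambda>k. b k \<alpha>)"
    using b \<alpha> unfolding solves_recursion_def by blast
  ultimately have "(\<lambda>k. b k \<alpha>) = (\<lambda>k. b' k \<alpha>)"
    using the1_equality[OF ex1, of "\<lambda>k. b k \<alpha>"] the1_equality[OF ex1, of "\<lambda>k. b' k \<alpha>"] by simp
  then show ?thesis
    by (rule fun_cong)
qed

lemma solves_recursion_ex1:
  fixes c :: "'n::finite \<Rightarrow> ('m::finite \<Rightarrow> nat) \<Rightarrow> ('n \<Rightarrow> nat) \<Rightarrow> complex"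
  assumes ne: "\<And>\<alpha>. \<alpha> \<noteq> mi_zero \<Longrightarrow> \<not> is_eigenvalue (linear_part c) (tpow q \<alpha>)"
  shows "\<exists>!b. solves_recursion q c b"
proof
  define b :: "'n \<Rightarrow> ('m \<Rightarrow> nat) \<Rightarrow> complex" where "b j \<alpha> = approx_solution q c (total_deg \<alpha>) j \<alpha>" for j \<alpha>
  have b0: "\<forall>j. b j mi_zero = 0"
    unfolding b_def by simp
  have agree: "approx_solution q c N j \<beta> = b j \<beta>" if "total_deg \<beta> \<le> N" for N j \<beta>
    using approx_solution_stable[OF that] unfolding b_def by simp
  have "tpow q \<alpha> * b j \<alpha> - (\<Sum>k\<in>UNIV. linear_part c j k * b k \<alpha>) = remainder_coeff (c j) b \<alpha>"
    if \<alpha>: "\<alpha> \<noteq> mi_zero" for \<alpha> j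
  proof -
    obtain N where N: "total_deg \<alpha> = Suc N"
      using \<alpha> total_deg_eq_0_iff by (metis not0_implies_Suc)
    have "\<forall>k. approx_solution q c N k mi_zero = 0"
      using agree[of mi_zero N] b0 by simp
    moreover have "\<forall>k \<beta>. total_deg \<beta> < total_deg \<alpha> \<longrightarrow> approx_solution q c N k \<beta> = b k \<beta>"
      using agree N by simp
    ultimately have "remainder_coeff (c j) (approx_solution q c N) \<alpha> = remainder_coeff (c j) b \<alpha>" for j
      using b0 by (intro remainder_coeff_cong_lower)
    moreover have "\<forall>j. tpow q \<alpha> * b j \<alpha> - (\<Sum>k\<in>UNIV. linear_part c j k * b k \<alpha>) =
        remainder_coeff (c j) (approx_solution q c N) \<alpha>"
      unfolding b_def N approx_solution.simps if_P[OF refl]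
      using theI'[OF ex1_solution_if_not_eigenvalue[OF ne[OF \<alpha>]]] .
    ultimately show ?thesis by simp
  qed
  with b0 show "solves_recursion q c b"
    unfolding solves_recursion_def by blast
  fix b' :: "'n \<Rightarrow> ('m \<Rightarrow> nat) \<Rightarrow> complex"
  assume b': "solves_recursion q c b'"
  have "\<forall>\<alpha>. total_deg \<alpha> = n \<longrightarrow> (\<forall>j. b' j \<alpha> = b j \<alpha>)" for n
  proof (induction n rule: less_induct)
    case (less n)
    show ?case
    proof (intro allI impI)
      fix \<alpha> :: "'m \<Rightarrow> nat" and j
      assume "total_deg \<alpha> = n"
      then show "b' j \<alpha> = b j \<alpha>"
      proof (cases "\<alpha> = mi_zero")
        case False
        have "\<forall>k \<beta>. total_deg \<beta> < total_deg \<alpha> \<longrightarrow> b' k \<beta> = b k \<beta>"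
          using less.IH \<open>total_deg \<alpha> = n\<close> by blast
        then show ?thesis
          by (rule solves_recursion_unique_coeff[OF ne[OF False] False b' \<open>solves_recursion q c b\<close>])
      qed (use b' b0 in \<open>simp add: solves_recursion_def\<close>)
    qed
  qed
  then show "b' = b"
    by (auto simp: fun_eq_iff)
qed

lemma formal_solution_ex1:
  assumes "\<And>j. c j mi_zero mi_zero = Y j"
    and "\<And>\<alpha>. \<alpha> \<noteq> mi_zero \<Longrightarrow> \<not> is_eigenvalue (linear_part c) (tpow q \<alpha>)"
  shows "\<exists>!b. formal_solution q c Y b"
  using solves_recursion_ex1[OF assms(2)] formal_solution_iff_solves_recursion[of c Y] assms(1)
  by simp

section \<open>Consequences of the convergent expansion of \<open>H\<close>\<close>

lemma power_series_atD:
  assumes "power_series_at f cf Y r" "\<forall>i. norm (t i) < r" "\<forall>k. norm (y k - Y k) < r"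
  shows "((\<lambda>(\<beta>, \<gamma>). cf \<beta> \<gamma> * tpow t \<beta> * tpow (\<lambda>k. y k - Y k) \<gamma>) has_sum f t y) UNIV"
  using assms unfolding power_series_at_def by blast

lemma power_series_at_pos: "power_series_at f cf Y r \<Longrightarrow> 0 < r"
  unfolding power_series_at_def by blast

lemma power_series_at_constant_coeff:
  assumes "power_series_at f cf Y r"
  shows "cf mi_zero mi_zero = f (\<lambda>_. 0) Y"
proof -
  let ?F = "\<lambda>(\<beta>, \<gamma>). cf \<beta> \<gamma> * tpow (\<lambda>_. 0) \<beta> * tpow (\<lambda>k. Y k - Y k) \<gamma>"
  have "(?F has_sum f (\<lambda>_. 0) Y) UNIV"
    using power_series_atD[OF assms, of "\<lambda>_. 0" Y] power_series_at_pos[OF assms] by simp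
  moreover have "(?F has_sum f (\<lambda>_. 0) Y) {(mi_zero, mi_zero)} \<longleftrightarrow> (?F has_sum f (\<lambda>_. 0) Y) UNIV"
    by (rule has_sum_cong_neutral) (auto simp: tpow_zero split: if_splits)
  ultimately have "(?F has_sum f (\<lambda>_. 0) Y) {(mi_zero, mi_zero)}"
    by simp
  moreover have "(?F has_sum cf mi_zero mi_zero) {(mi_zero, mi_zero)}"
    using has_sum_finite[of "{(mi_zero, mi_zero)}" ?F] by (simp add: tpow_zero)
  ultimately show ?thesis
    by (rule has_sum_unique[symmetric])
qed

lemma power_series_at_slice_has_sum:
  fixes cf :: "('m::finite \<Rightarrow> nat) \<Rightarrow> ('n::finite \<Rightarrow> nat) \<Rightarrow> complex"
  assumes ps: "power_series_at f cf Y r" and w: "norm w < r"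
  shows "((\<lambda>d. cf mi_zero (mi_single k d) * w ^ d) has_sum f (\<lambda>_. 0) (Y(k := Y k + w))) UNIV"
proof -
  let ?F = "\<lambda>(\<beta>, \<gamma>). cf \<beta> \<gamma> * tpow (\<lambda>_. 0) \<beta> * tpow (\<lambda>l. if l = k then w else 0) \<gamma>"
  let ?emb = "\<lambda>d. (mi_zero, mi_single k d)"
  have "(\<lambda>l. (Y(k := Y k + w)) l - Y l) = (\<lambda>l. if l = k then w else 0)"
    by (auto simp: fun_eq_iff)
  then have "(?F has_sum f (\<lambda>_. 0) (Y(k := Y k + w))) UNIV"
    using power_series_atD[OF ps, of "\<lambda>_. 0" "Y(k := Y k + w)"] power_series_at_pos[OF ps] w
    by (simp add: norm_minus_commute)
  moreover have "(?F has_sum f (\<lambda>_. 0) (Y(k := Y k + w))) (range ?emb) \<longleftrightarrow>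
      (?F has_sum f (\<lambda>_. 0) (Y(k := Y k + w))) UNIV"
  proof (rule has_sum_cong_neutral)
    fix x :: "('m \<Rightarrow> nat) \<times> ('n \<Rightarrow> nat)"
    assume "x \<in> UNIV - range ?emb"
    then show "?F x = 0"
      by (cases x) (auto simp: tpow_zero tpow_single)
  qed auto
  ultimately have "(?F has_sum f (\<lambda>_. 0) (Y(k := Y k + w))) (range ?emb)"
    by simp
  then have "((?F \<circ> ?emb) has_sum f (\<lambda>_. 0) (Y(k := Y k + w))) UNIV"
    using has_sum_reindex[of ?emb UNIV ?F] inj_mi_single[of k] by (simp add: inj_def)
  moreover have "?F \<circ> ?emb = (\<lambda>d. cf mi_zero (mi_single k d) * w ^ d)"
    by (auto simp: fun_eq_iff tpow_single mi_single_def)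
  ultimately show ?thesis by simp
qed

lemma power_series_at_partial_deriv:
  assumes ps: "power_series_at f cf Y r"
  shows "deriv (\<lambda>z. f (\<lambda>_. 0) (Y(k := z))) (Y k) = cf mi_zero (mi_unit k)"
proof -
  have r: "0 < r"
    by (rule power_series_at_pos[OF ps])
  define a where "a d = cf mi_zero (mi_single k d)" for d
  define G where "G w = (\<Sum>d. a d * w ^ d)" for w :: complex
  have G: "f (\<lambda>_. 0) (Y(k := Y k + w)) = G w" if "norm w < r" for w
    using has_sum_imp_sums[OF power_series_at_slice_has_sum[OF ps that]]
    unfolding G_def a_def by (simp add: sums_iff)
  have "summable (\<lambda>d. a d * complex_of_real (r/2) ^ d)"
    using has_sum_imp_sums[OF power_series_at_slice_has_sum[OF ps, of "complex_of_real (r/2)" k]] r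
    unfolding a_def by (auto simp: sums_iff)
  then have "(G has_field_derivative (\<Sum>n. diffs a n * 0 ^ n)) (at 0)"
    unfolding G_def by (rule termdiffs_strong) (use r in simp)
  then have "(G has_field_derivative a 1) (at (Y k - Y k))"
    by (simp add: diffs_def)
  then have "((\<lambda>z. G (z - Y k)) has_field_derivative a 1 * 1) (at (Y k))"
    by (rule DERIV_chain2) (auto intro!: derivative_eq_intros)
  then have "((\<lambda>z. f (\<lambda>_. 0) (Y(k := z))) has_field_derivative a 1) (at (Y k))"
    unfolding mult_1_right
  proof (rule has_field_derivative_transform_within_open[of _ _ _ "ball (Y k) r"])
    fix z assume "z \<in> ball (Y k) r"
    then show "G (z - Y k) = f (\<lambda>_. 0) (Y(k := z))"
      using G[of "z - Y k"] by (simp add: dist_norm norm_minus_commute)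
  qed (use r in auto)
  then show ?thesis
    unfolding a_def by (rule DERIV_imp_deriv)
qed

lemma power_series_at_coeff_bound:
  fixes cf :: "('m::finite \<Rightarrow> nat) \<Rightarrow> ('n::finite \<Rightarrow> nat) \<Rightarrow> complex"
  assumes ps: "power_series_at f cf Y r"
  shows "\<exists>M\<ge>0. \<forall>\<beta> \<gamma>. norm (cf \<beta> \<gamma>) \<le> M * (2/r) ^ (total_deg \<beta> + total_deg \<gamma>)"
proof -
  have r: "0 < r"
    by (rule power_series_at_pos[OF ps])
  let ?c = "complex_of_real (r/2)"
  let ?F = "\<lambda>(\<beta>, \<gamma>). cf \<beta> \<gamma> * tpow (\<lambda>_::'m. ?c) \<beta> * tpow (\<lambda>_::'n. ?c) \<gamma>"
  have "(\<lambda>l. (Y l + ?c) - Y l) = (\<lambda>_. ?c)"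
    by simp
  then have "?F summable_on UNIV"
    using power_series_atD[OF ps, of "\<lambda>_. ?c" "\<lambda>l. Y l + ?c"] r
    by (auto intro: has_sum_imp_summable)
  then have sn: "(\<lambda>x. norm (?F x)) summable_on UNIV"
    using summable_on_iff_abs_summable_on_complex by blast
  define M where "M = infsum (\<lambda>x. norm (?F x)) UNIV"
  have "norm (cf \<beta> \<gamma>) \<le> M * (2/r) ^ (total_deg \<beta> + total_deg \<gamma>)" for \<beta> \<gamma>
  proof -
    have "(\<Sum>x\<in>{(\<beta>, \<gamma>)}. norm (?F x)) \<le> M"
      unfolding M_def by (rule finite_sum_le_infsum[OF sn]) auto
    then have "norm (cf \<beta> \<gamma>) * (r/2) ^ (total_deg \<beta> + total_deg \<gamma>) \<le> M"
      using r by (simp add: tpow_const norm_mult norm_power power_add)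
    then show ?thesis
      using r by (simp add: power_divide pos_le_divide_eq divide_le_eq mult.commute)
  qed
  moreover have "0 \<le> M"
    unfolding M_def by (rule infsum_nonneg) auto
  ultimately show ?thesis by blast
qed

lemma power_series_at_family_coeff_bound:
  fixes cf :: "'j::finite \<Rightarrow> ('m::finite \<Rightarrow> nat) \<Rightarrow> ('n::finite \<Rightarrow> nat) \<Rightarrow> complex"
  assumes "\<forall>j. power_series_at (f j) (cf j) Y r"
  shows "\<exists>M\<ge>0. \<forall>j \<beta> \<gamma>. norm (cf j \<beta> \<gamma>) \<le> M * (2/r) ^ (total_deg \<beta> + total_deg \<gamma>)"
proof -
  have "\<forall>j. \<exists>M\<ge>0. \<forall>\<beta> \<gamma>. norm (cf j \<beta> \<gamma>) \<le> M * (2/r) ^ (total_deg \<beta> + total_deg \<gamma>)"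
    using power_series_at_coeff_bound assms by blast
  then obtain Mf where "\<forall>j. 0 \<le> Mf j \<and>
      (\<forall>\<beta> \<gamma>. norm (cf j \<beta> \<gamma>) \<le> Mf j * (2/r) ^ (total_deg \<beta> + total_deg \<gamma>))"
    by (metis choice)
  then have Mf: "\<And>j. 0 \<le> Mf j"
    "\<And>j \<beta> \<gamma>. norm (cf j \<beta> \<gamma>) \<le> Mf j * (2/r) ^ (total_deg \<beta> + total_deg \<gamma>)"
    by blast+
  have "norm (cf j \<beta> \<gamma>) \<le> (\<Sum>j\<in>UNIV. Mf j) * (2/r) ^ (total_deg \<beta> + total_deg \<gamma>)" for j \<beta> \<gamma>
  proof -
    have "0 < r"
      using assms power_series_at_pos by blast
    moreover have "Mf j \<le> (\<Sum>j\<in>UNIV. Mf j)"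
      using Mf(1) by (intro member_le_sum) auto
    ultimately show ?thesis
      using Mf(2)[of j \<beta> \<gamma>] by (smt (verit) mult_right_mono zero_le_divide_iff zero_le_power)
  qed
  moreover have "0 \<le> (\<Sum>j\<in>UNIV. Mf j)"
    using Mf(1) by (simp add: sum_nonneg)
  ultimately show ?thesis by blast
qed

section \<open>Majorant estimates\<close>

lemma sum_half_power_deg_le: "(\<Sum>\<beta>\<in>deg_le N. (1/2::real) ^ total_deg (\<beta> :: 'i::finite \<Rightarrow> nat)) \<le> 2 ^ CARD('i)"
proof -
  have geom: "(\<Sum>k\<le>N. (1/2::real) ^ k) \<le> 2"
  proof -
    have "(\<Sum>k\<le>N. (1/2::real) ^ k) = 2 - (1/2) ^ N"
      by (induction N) auto
    then show ?thesis by simp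
  qed
  have sub: "deg_le N \<subseteq> PiE (UNIV :: 'i set) (\<lambda>_. {..N})"
    using deg_le_subset_below by (fastforce simp: PiE_def extensional_def)
  have "(\<Sum>\<beta>\<in>deg_le N. (1/2::real) ^ total_deg (\<beta> :: 'i \<Rightarrow> nat))
      \<le> (\<Sum>\<beta>\<in>PiE (UNIV :: 'i set) (\<lambda>_. {..N}). (1/2) ^ total_deg \<beta>)"
    by (rule sum_mono2) (use sub in \<open>auto intro: finite_PiE\<close>)
  also have "\<dots> = (\<Sum>\<beta>\<in>PiE (UNIV :: 'i set) (\<lambda>_. {..N}). \<Prod>i\<in>UNIV. (1/2) ^ \<beta> i)"
    by (simp add: power_sum)
  also have "\<dots> = (\<Prod>i\<in>(UNIV :: 'i set). \<Sum>k\<le>N. (1/2) ^ k)"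
    by (rule prod_sum_PiE[symmetric]) auto
  also have "\<dots> \<le> (\<Prod>i\<in>(UNIV :: 'i set). 2)"
    using geom by (intro prod_mono) (auto intro: sum_nonneg)
  finally show ?thesis by simp
qed

lemma half_power_deg_summable:
  assumes "0 \<le> T"
  shows "(\<lambda>\<alpha>::'i::finite \<Rightarrow> nat. T * (1/2::real) ^ total_deg \<alpha>) summable_on UNIV"
proof (rule nonneg_bdd_above_summable_on)
  show "bdd_above (sum (\<lambda>\<alpha>::'i \<Rightarrow> nat. T * (1/2) ^ total_deg \<alpha>) ` {F. F \<subseteq> UNIV \<and> finite F})"
  proof (rule bdd_aboveI)
    fix s assume "s \<in> sum (\<lambda>\<alpha>::'i \<Rightarrow> nat. T * (1/2) ^ total_deg \<alpha>) ` {F. F \<subseteq> UNIV \<and> finite F}"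
    then obtain F :: "('i \<Rightarrow> nat) set" where F: "finite F" "s = (\<Sum>\<alpha>\<in>F. T * (1/2) ^ total_deg \<alpha>)"
      by auto
    define N where "N = (\<Sum>\<alpha>\<in>F. total_deg \<alpha>)"
    have "F \<subseteq> deg_le N"
      unfolding N_def using F(1) by (auto intro: member_le_sum)
    then have "s \<le> (\<Sum>\<alpha>\<in>deg_le N. T * (1/2) ^ total_deg (\<alpha> :: 'i \<Rightarrow> nat))"
      unfolding F(2) using assms by (intro sum_mono2) auto
    also have "\<dots> \<le> T * 2 ^ CARD('i)"
      using sum_half_power_deg_le[of N, where 'i = 'i] assms
      by (simp add: sum_distrib_left[symmetric] mult_left_mono)
    finally show "s \<le> T * 2 ^ CARD('i)" .
  qed
qed (use assms in simp)

lemma reindex_diff_sum_le: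
  fixes F :: "('i::finite \<Rightarrow> nat) \<Rightarrow> ('i \<Rightarrow> nat) \<Rightarrow> real"
  assumes "\<And>\<beta> \<alpha>. 0 \<le> F \<beta> \<alpha>"
  shows "(\<Sum>\<alpha>\<in>deg_le N. \<Sum>\<beta>\<in>below \<alpha>. F \<beta> (\<lambda>i. \<alpha> i - \<beta> i))
      \<le> (\<Sum>\<beta>\<in>deg_le N. \<Sum>\<alpha>'\<in>deg_le N. F \<beta> \<alpha>')"
proof -
  have "(\<Sum>\<alpha>\<in>deg_le N. \<Sum>\<beta>\<in>below \<alpha>. F \<beta> (\<lambda>i. \<alpha> i - \<beta> i))
      = (\<Sum>z\<in>Sigma (deg_le N) below. F (snd z) (\<lambda>i. fst z i - snd z i))"
    by (subst sum.Sigma) (simp_all add: split_beta)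
  also have "\<dots> \<le> (\<Sum>y\<in>deg_le N \<times> deg_le N. F (fst y) (snd y))"
  proof (rule sum_le_included[where i = "\<lambda>y. (\<lambda>i. snd y i + fst y i, fst y)"])
    show "\<forall>z\<in>Sigma (deg_le N) below. \<exists>y\<in>deg_le N \<times> deg_le N.
        (\<lambda>i. snd y i + fst y i, fst y) = z \<and> F (snd z) (\<lambda>i. fst z i - snd z i) \<le> F (fst y) (snd y)"
    proof
      fix z :: "('i \<Rightarrow> nat) \<times> ('i \<Rightarrow> nat)" assume "z \<in> Sigma (deg_le N) below"
      then obtain \<alpha> \<beta> where z: "z = (\<alpha>, \<beta>)" "total_deg \<alpha> \<le> N" "\<forall>i. \<beta> i \<le> \<alpha> i"
        by (cases z) auto
      then have "total_deg \<beta> \<le> N" "total_deg (\<lambda>i. \<alpha> i - \<beta> i) \<le> N"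
        using total_deg_diff[OF z(3)] by linarith+
      moreover have "(\<lambda>i. (\<alpha> i - \<beta> i) + \<beta> i) = \<alpha>"
        using z(3) by (auto simp: fun_eq_iff)
      ultimately show "\<exists>y\<in>deg_le N \<times> deg_le N.
          (\<lambda>i. snd y i + fst y i, fst y) = z \<and> F (snd z) (\<lambda>i. fst z i - snd z i) \<le> F (fst y) (snd y)"
        using z(1) by (intro bexI[of _ "(\<beta>, \<lambda>i. \<alpha> i - \<beta> i)"]) auto
    qed
  qed (use assms in auto)
  also have "\<dots> = (\<Sum>\<beta>\<in>deg_le N. \<Sum>\<alpha>'\<in>deg_le N. F \<beta> \<alpha>')"
    by (simp add: sum.cartesian_product split_beta)
  finally show ?thesis .
qed

lemma power_le_half_power:
  fixes z :: real
  assumes "0 \<le> z" "z \<le> 1/2" "k \<le> d"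
  shows "z ^ d \<le> z ^ k * (1/2) ^ (d - k)"
proof -
  have "z ^ (d - k) \<le> (1/2) ^ (d - k)"
    using assms by (intro power_mono) auto
  then have "z ^ k * z ^ (d - k) \<le> z ^ k * (1/2) ^ (d - k)"
    using assms by (intro mult_left_mono) auto
  then show ?thesis
    using assms(3) by (simp add: power_add[symmetric])
qed

text \<open>A non-affine index has either \<open>\<beta> \<noteq> 0\<close> or \<open>total_deg \<gamma> \<ge> 2\<close>, which produces the small factor
  \<open>z\<close> or \<open>w\<^sup>2\<close> respectively.\<close>

lemma nonaffine_term_le:
  fixes z w :: real
  assumes z: "0 \<le> z" "z \<le> 1/2" and w: "0 \<le> w" "w \<le> 1/2" and "\<not> affine_index \<beta> \<gamma>"
  shows "z ^ total_deg \<beta> * w ^ total_deg \<gamma>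
      \<le> (4 * w\<^sup>2 + 2 * z) * ((1/2) ^ total_deg \<beta> * (1/2) ^ total_deg \<gamma>)"
proof (cases "\<beta> = mi_zero")
  case True
  with assms(5) have "2 \<le> total_deg \<gamma>"
    by (intro two_le_total_deg) (auto simp: affine_index_def)
  then have "w ^ total_deg \<gamma> \<le> w\<^sup>2 * (1/2) ^ (total_deg \<gamma> - 2)"
    using w by (rule power_le_half_power[rotated 2])
  also have "\<dots> = 4 * w\<^sup>2 * (1/2) ^ total_deg \<gamma>"
    using \<open>2 \<le> total_deg \<gamma>\<close> by (simp add: power_diff power2_eq_square field_simps)
  also have "\<dots> \<le> (4 * w\<^sup>2 + 2 * z) * (1/2) ^ total_deg \<gamma>"
    using z by (intro mult_right_mono) auto
  finally show ?thesis
    using True by simp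
next
  case False
  then have "1 \<le> total_deg \<beta>"
    using total_deg_eq_0_iff by (metis less_one not_le)
  then have "z ^ total_deg \<beta> \<le> z * (1/2) ^ (total_deg \<beta> - 1)"
    using z power_le_half_power[of z 1] by simp
  also have "\<dots> = 2 * z * (1/2) ^ total_deg \<beta>"
    using \<open>1 \<le> total_deg \<beta>\<close> by (simp add: power_diff field_simps)
  finally have "z ^ total_deg \<beta> * w ^ total_deg \<gamma> \<le> (2 * z * (1/2) ^ total_deg \<beta>) * (1/2) ^ total_deg \<gamma>"
    using z w by (intro mult_mono power_mono) auto
  also have "\<dots> \<le> (4 * w\<^sup>2 + 2 * z) * ((1/2) ^ total_deg \<beta> * (1/2) ^ total_deg \<gamma>)"
    by (simp add: mult_ac mult_right_mono)
  finally show ?thesis .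
qed

lemma nonaffine_double_sum_le:
  fixes z w :: real
  assumes z: "0 \<le> z" "z \<le> 1/2" and w: "0 \<le> w" "w \<le> 1/2"
  shows "(\<Sum>\<beta>\<in>deg_le N. \<Sum>\<gamma>\<in>deg_le N. if affine_index (\<beta> :: 'm::finite \<Rightarrow> nat) (\<gamma> :: 'n::finite \<Rightarrow> nat)
            then 0 else z ^ total_deg \<beta> * w ^ total_deg \<gamma>)
      \<le> (4 * w\<^sup>2 + 2 * z) * 2 ^ (CARD('m) + CARD('n))"
proof -
  have "(\<Sum>\<beta>\<in>deg_le N. \<Sum>\<gamma>\<in>deg_le N. if affine_index (\<beta> :: 'm \<Rightarrow> nat) (\<gamma> :: 'n \<Rightarrow> nat)
            then 0 else z ^ total_deg \<beta> * w ^ total_deg \<gamma>)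
      \<le> (\<Sum>\<beta>\<in>deg_le N. \<Sum>\<gamma>\<in>deg_le N.
            (4 * w\<^sup>2 + 2 * z) * ((1/2) ^ total_deg (\<beta> :: 'm \<Rightarrow> nat) * (1/2) ^ total_deg (\<gamma> :: 'n \<Rightarrow> nat)))"
  proof (intro sum_mono)
    fix \<beta> :: "'m \<Rightarrow> nat" and \<gamma> :: "'n \<Rightarrow> nat"
    show "(if affine_index \<beta> \<gamma> then 0 else z ^ total_deg \<beta> * w ^ total_deg \<gamma>)
        \<le> (4 * w\<^sup>2 + 2 * z) * ((1/2) ^ total_deg \<beta> * (1/2) ^ total_deg \<gamma>)"
      using nonaffine_term_le[OF z w, of \<beta> \<gamma>] z w by auto
  qed
  also have "\<dots> = (4 * w\<^sup>2 + 2 * z) *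
      ((\<Sum>\<beta>\<in>deg_le N. (1/2) ^ total_deg (\<beta> :: 'm \<Rightarrow> nat)) * (\<Sum>\<gamma>\<in>deg_le N. (1/2) ^ total_deg (\<gamma> :: 'n \<Rightarrow> nat)))"
    by (simp add: sum_product sum_distrib_left[symmetric])
  also have "\<dots> \<le> (4 * w\<^sup>2 + 2 * z) * (2 ^ CARD('m) * 2 ^ CARD('n))"
    using sum_half_power_deg_le[of N, where 'i = 'm] sum_half_power_deg_le[of N, where 'i = 'n] z w
    by (intro mult_left_mono mult_mono) (auto intro: sum_nonneg)
  finally show ?thesis
    by (simp add: power_add)
qed

definition remainder_majorant ::
  "(('m::finite \<Rightarrow> nat) \<Rightarrow> ('n::finite \<Rightarrow> nat) \<Rightarrow> real) \<Rightarrow> (('m \<Rightarrow> nat) \<Rightarrow> real) \<Rightarrow> ('m \<Rightarrow> nat) \<Rightarrow> real" where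
  "remainder_majorant C P \<alpha> = (\<Sum>\<beta>\<in>below \<alpha>. \<Sum>\<gamma>\<in>deg_le (total_deg \<alpha>).
     if affine_index \<beta> \<gamma> then 0 else C \<beta> \<gamma> * mono_majorant P \<gamma> (\<lambda>i. \<alpha> i - \<beta> i))"

lemma remainder_majorant_nonneg:
  "(\<And>\<beta> \<gamma>. 0 \<le> C \<beta> \<gamma>) \<Longrightarrow> (\<And>\<beta>. 0 \<le> P \<beta>) \<Longrightarrow> 0 \<le> remainder_majorant C P \<alpha>"
  unfolding remainder_majorant_def by (intro sum_nonneg) (auto intro!: mult_nonneg_nonneg mono_majorant_nonneg)

lemma norm_remainder_coeff_le:
  assumes "\<And>\<beta> \<gamma>. norm (cf \<beta> \<gamma>) \<le> C \<beta> \<gamma>" and "\<And>k \<beta>. norm (u k \<beta>) \<le> P \<beta>"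
  shows "norm (remainder_coeff cf u \<alpha>) \<le> remainder_majorant C P \<alpha>"
  unfolding remainder_coeff_def remainder_majorant_def
proof (rule order.trans[OF norm_sum sum_mono[OF order.trans[OF norm_sum sum_mono]]])
  fix \<beta> \<gamma>
  show "norm (if affine_index \<beta> \<gamma> then 0 else cf \<beta> \<gamma> * mono_coeff u \<gamma> (\<lambda>i. \<alpha> i - \<beta> i))
      \<le> (if affine_index \<beta> \<gamma> then 0 else C \<beta> \<gamma> * mono_majorant P \<gamma> (\<lambda>i. \<alpha> i - \<beta> i))"
    using norm_mono_coeff_le[of u P, OF assms(2)] assms(1) order.trans[OF norm_ge_zero assms(1)]
    by (auto simp: norm_mult intro!: mult_mono)
qed

lemma remainder_majorant_mult_power_le:
  fixes C :: "('m::finite \<Rightarrow> nat) \<Rightarrow> ('n::finite \<Rightarrow> nat) \<Rightarrow> real"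
  assumes C: "\<And>\<beta> \<gamma>. 0 \<le> C \<beta> \<gamma>" and P: "\<And>\<beta>. 0 \<le> P \<beta>" and x: "0 \<le> x"
    and \<alpha>: "total_deg \<alpha> \<le> N"
  shows "remainder_majorant C P \<alpha> * x ^ total_deg \<alpha> \<le> (\<Sum>\<beta>\<in>below \<alpha>. \<Sum>\<gamma>\<in>deg_le N.
      if affine_index \<beta> \<gamma> then 0 else
        C \<beta> \<gamma> * x ^ total_deg \<beta> * (x ^ total_deg (\<lambda>i. \<alpha> i - \<beta> i) * mono_majorant P \<gamma> (\<lambda>i. \<alpha> i - \<beta> i)))"
proof -
  have "remainder_majorant C P \<alpha> * x ^ total_deg \<alpha> = (\<Sum>\<beta>\<in>below \<alpha>. \<Sum>\<gamma>\<in>deg_le (total_deg \<alpha>).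
      if affine_index \<beta> \<gamma> then 0 else
        C \<beta> \<gamma> * x ^ total_deg \<beta> * (x ^ total_deg (\<lambda>i. \<alpha> i - \<beta> i) * mono_majorant P \<gamma> (\<lambda>i. \<alpha> i - \<beta> i)))"
    unfolding remainder_majorant_def sum_distrib_right
  proof (intro sum.cong refl)
    fix \<beta> \<gamma> assume "\<beta> \<in> below \<alpha>"
    then have "x ^ total_deg \<alpha> = x ^ total_deg \<beta> * x ^ total_deg (\<lambda>i. \<alpha> i - \<beta> i)"
      using total_deg_diff[of \<beta> \<alpha>] by (simp add: power_add[symmetric] add.commute)
    then show "(if affine_index \<beta> \<gamma> then 0 else C \<beta> \<gamma> * mono_majorant P \<gamma> (\<lambda>i. \<alpha> i - \<beta> i)) * x ^ total_deg \<alpha>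
        = (if affine_index \<beta> \<gamma> then 0 else
            C \<beta> \<gamma> * x ^ total_deg \<beta> * (x ^ total_deg (\<lambda>i. \<alpha> i - \<beta> i) * mono_majorant P \<gamma> (\<lambda>i. \<alpha> i - \<beta> i)))"
      by (simp add: mult_ac)
  qed
  also have "\<dots> \<le> (\<Sum>\<beta>\<in>below \<alpha>. \<Sum>\<gamma>\<in>deg_le N.
      if affine_index \<beta> \<gamma> then 0 else
        C \<beta> \<gamma> * x ^ total_deg \<beta> * (x ^ total_deg (\<lambda>i. \<alpha> i - \<beta> i) * mono_majorant P \<gamma> (\<lambda>i. \<alpha> i - \<beta> i)))"
    using \<alpha> C P x by (intro sum_mono sum_mono2) (auto intro!: mult_nonneg_nonneg mono_majorant_nonneg)
  finally show ?thesis .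
qed

lemma weighted_sum_remainder_majorant_le:
  fixes P :: "('m::finite \<Rightarrow> nat) \<Rightarrow> real" and M :: real and N :: nat
  assumes M: "0 \<le> M" and s: "0 \<le> s" and x: "0 \<le> x" and P: "\<And>\<beta>. 0 \<le> P \<beta>"
  defines "\<Phi> \<equiv> \<Sum>\<beta>\<in>deg_le N. P \<beta> * x ^ total_deg \<beta>"
  shows "(\<Sum>\<alpha>\<in>deg_le N. remainder_majorant (\<lambda>\<beta> (\<gamma> :: 'n::finite \<Rightarrow> nat). M * s ^ (total_deg \<beta> + total_deg \<gamma>)) P \<alpha>
            * x ^ total_deg \<alpha>)
      \<le> M * (\<Sum>\<beta>\<in>deg_le N. \<Sum>\<gamma>\<in>deg_le N. if affine_index (\<beta> :: 'm \<Rightarrow> nat) (\<gamma> :: 'n \<Rightarrow> nat) then 0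
            else (s * x) ^ total_deg \<beta> * (s * \<Phi>) ^ total_deg \<gamma>)"
proof -
  define F where "F \<beta> \<alpha>' = (\<Sum>\<gamma>\<in>deg_le N. if affine_index \<beta> (\<gamma> :: 'n \<Rightarrow> nat) then 0 else
      M * s ^ (total_deg \<beta> + total_deg \<gamma>) * x ^ total_deg \<beta> * (x ^ total_deg \<alpha>' * mono_majorant P \<gamma> \<alpha>'))"
    for \<beta> :: "'m \<Rightarrow> nat" and \<alpha>'
  have F0: "0 \<le> F \<beta> \<alpha>'" for \<beta> \<alpha>'
    unfolding F_def using M s x P by (auto intro!: sum_nonneg mult_nonneg_nonneg mono_majorant_nonneg)
  have "(\<Sum>\<alpha>\<in>deg_le N. remainder_majorant (\<lambda>\<beta> (\<gamma> :: 'n \<Rightarrow> nat). M * s ^ (total_deg \<beta> + total_deg \<gamma>)) P \<alpha>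
        * x ^ total_deg \<alpha>) \<le> (\<Sum>\<alpha>\<in>deg_le N. \<Sum>\<beta>\<in>below \<alpha>. F \<beta> (\<lambda>i. \<alpha> i - \<beta> i))"
    unfolding F_def using M s x P by (intro sum_mono remainder_majorant_mult_power_le) auto
  also have "\<dots> \<le> (\<Sum>\<beta>\<in>deg_le N. \<Sum>\<alpha>'\<in>deg_le N. F \<beta> \<alpha>')"
    using F0 by (rule reindex_diff_sum_le)
  also have "\<dots> = (\<Sum>\<beta>\<in>deg_le N. \<Sum>\<gamma>\<in>deg_le N. if affine_index (\<beta> :: 'm \<Rightarrow> nat) (\<gamma> :: 'n \<Rightarrow> nat) then 0 else
      M * (s * x) ^ total_deg \<beta> * s ^ total_deg \<gamma> *
        (\<Sum>\<alpha>'\<in>deg_le N. x ^ total_deg \<alpha>' * mono_majorant P \<gamma> \<alpha>'))"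
  proof (rule sum.cong[OF refl])
    fix \<beta> :: "'m \<Rightarrow> nat"
    show "(\<Sum>\<alpha>'\<in>deg_le N. F \<beta> \<alpha>') = (\<Sum>\<gamma>\<in>deg_le N. if affine_index \<beta> (\<gamma> :: 'n \<Rightarrow> nat) then 0 else
        M * (s * x) ^ total_deg \<beta> * s ^ total_deg \<gamma> *
          (\<Sum>\<alpha>'\<in>deg_le N. x ^ total_deg \<alpha>' * mono_majorant P \<gamma> \<alpha>'))"
      unfolding F_def
      by (subst sum.swap, intro sum.cong refl)
        (simp add: sum_distrib_left power_add power_mult_distrib mult_ac)
  qed
  also have "\<dots> \<le> (\<Sum>\<beta>\<in>deg_le N. \<Sum>\<gamma>\<in>deg_le N. if affine_index (\<beta> :: 'm \<Rightarrow> nat) (\<gamma> :: 'n \<Rightarrow> nat) then 0 else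
      M * ((s * x) ^ total_deg \<beta> * (s * \<Phi>) ^ total_deg \<gamma>))"
  proof (intro sum_mono)
    fix \<beta> :: "'m \<Rightarrow> nat" and \<gamma> :: "'n \<Rightarrow> nat"
    have "(\<Sum>\<alpha>'\<in>deg_le N. x ^ total_deg \<alpha>' * mono_majorant P \<gamma> \<alpha>') \<le> \<Phi> ^ total_deg \<gamma>"
      unfolding \<Phi>_def by (rule weighted_sum_mono_majorant_le[OF x P])
    then have "M * (s * x) ^ total_deg \<beta> * s ^ total_deg \<gamma> * (\<Sum>\<alpha>'\<in>deg_le N. x ^ total_deg \<alpha>' * mono_majorant P \<gamma> \<alpha>')
        \<le> M * (s * x) ^ total_deg \<beta> * s ^ total_deg \<gamma> * \<Phi> ^ total_deg \<gamma>"
      using M s x by (intro mult_left_mono) auto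
    then show "(if affine_index \<beta> \<gamma> then 0 else M * (s * x) ^ total_deg \<beta> * s ^ total_deg \<gamma> *
          (\<Sum>\<alpha>'\<in>deg_le N. x ^ total_deg \<alpha>' * mono_majorant P \<gamma> \<alpha>'))
        \<le> (if affine_index \<beta> \<gamma> then 0 else M * ((s * x) ^ total_deg \<beta> * (s * \<Phi>) ^ total_deg \<gamma>))"
      by (simp add: power_mult_distrib mult_ac)
  qed
  also have "\<dots> = M * (\<Sum>\<beta>\<in>deg_le N. \<Sum>\<gamma>\<in>deg_le N. if affine_index (\<beta> :: 'm \<Rightarrow> nat) (\<gamma> :: 'n \<Rightarrow> nat) then 0
      else (s * x) ^ total_deg \<beta> * (s * \<Phi>) ^ total_deg \<gamma>)"
    by (simp add: sum_distrib_left if_distrib cong: if_cong)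
  finally show ?thesis .
qed

definition coeff_norm :: "('n::finite \<Rightarrow> ('m \<Rightarrow> nat) \<Rightarrow> complex) \<Rightarrow> ('m \<Rightarrow> nat) \<Rightarrow> real" where
  "coeff_norm b \<alpha> = l1_norm (\<lambda>j. b j \<alpha>)"

definition majorant_sum :: "('n::finite \<Rightarrow> ('m::finite \<Rightarrow> nat) \<Rightarrow> complex) \<Rightarrow> real \<Rightarrow> nat \<Rightarrow> real" where
  "majorant_sum b x N = (\<Sum>\<alpha>\<in>deg_le N. coeff_norm b \<alpha> * x ^ total_deg \<alpha>)"

lemma coeff_norm_nonneg: "0 \<le> coeff_norm b \<alpha>"
  unfolding coeff_norm_def by (rule l1_norm_nonneg)

lemma majorant_sum_nonneg: "0 \<le> x \<Longrightarrow> 0 \<le> majorant_sum b x N"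
  unfolding majorant_sum_def by (intro sum_nonneg mult_nonneg_nonneg coeff_norm_nonneg) auto

lemma norm_coeff_le_majorant_sum:
  assumes "0 \<le> x"
  shows "norm (b j \<alpha>) * x ^ total_deg \<alpha> \<le> majorant_sum b x (total_deg \<alpha>)"
proof -
  have "norm (b j \<alpha>) \<le> coeff_norm b \<alpha>"
    unfolding coeff_norm_def l1_norm_def by (rule member_le_sum) auto
  then have "norm (b j \<alpha>) * x ^ total_deg \<alpha> \<le> coeff_norm b \<alpha> * x ^ total_deg \<alpha>"
    using assms by (intro mult_right_mono) auto
  also have "\<dots> \<le> majorant_sum b x (total_deg \<alpha>)"
    unfolding majorant_sum_def using assms
    by (intro member_le_sum mult_nonneg_nonneg coeff_norm_nonneg) auto
  finally show ?thesis .
qed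

lemma coeff_norm_le_remainder_majorant:
  fixes c :: "'n::finite \<Rightarrow> ('m::finite \<Rightarrow> nat) \<Rightarrow> ('n \<Rightarrow> nat) \<Rightarrow> complex"
  assumes b: "solves_recursion q c b"
    and \<epsilon>: "\<forall>v. \<epsilon> * l1_norm v \<le> shifted_norm (linear_part c) (tpow q \<alpha>) v"
    and c: "\<forall>j \<beta> \<gamma>. norm (c j \<beta> \<gamma>) \<le> M * s ^ (total_deg \<beta> + total_deg \<gamma>)"
    and \<alpha>: "\<alpha> \<noteq> mi_zero" "total_deg \<alpha> \<le> N"
  shows "\<epsilon> * coeff_norm b \<alpha> \<le> CARD('n) * remainder_majorant (\<lambda>\<beta> (\<gamma> :: 'n \<Rightarrow> nat). M * s ^ (total_deg \<beta> + total_deg \<gamma>))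
           (\<lambda>\<beta>. if total_deg \<beta> < N then coeff_norm b \<beta> else 0) \<alpha>"
proof -
  define bt where "bt k \<beta> = (if total_deg \<beta> < N then b k \<beta> else 0)" for k \<beta>
  let ?RM = "remainder_majorant (\<lambda>\<beta> (\<gamma> :: 'n \<Rightarrow> nat). M * s ^ (total_deg \<beta> + total_deg \<gamma>))
    (\<lambda>\<beta>. if total_deg \<beta> < N then coeff_norm b \<beta> else 0) \<alpha>"
  have b0: "\<forall>k. b k mi_zero = 0"
    using b unfolding solves_recursion_def by blast
  have "norm (remainder_coeff (c j) b \<alpha>) \<le> ?RM" for j
  proof -
    have "remainder_coeff (c j) b \<alpha> = remainder_coeff (c j) bt \<alpha>"
      using b0 \<alpha>(2) unfolding bt_def by (intro remainder_coeff_cong_lower) auto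
    moreover have "norm (bt k \<beta>) \<le> (if total_deg \<beta> < N then coeff_norm b \<beta> else 0)" for k \<beta>
      unfolding bt_def coeff_norm_def l1_norm_def by (auto intro: member_le_sum)
    ultimately show ?thesis
      using norm_remainder_coeff_le[of "c j" "\<lambda>\<beta> \<gamma>. M * s ^ (total_deg \<beta> + total_deg \<gamma>)" bt] c
      by simp
  qed
  then have "(\<Sum>j\<in>UNIV. norm (remainder_coeff (c j) b \<alpha>)) \<le> CARD('n) * ?RM"
    using sum_mono[of UNIV "\<lambda>j. norm (remainder_coeff (c j) b \<alpha>)" "\<lambda>_. ?RM"] by simp
  moreover have "shifted_norm (linear_part c) (tpow q \<alpha>) (\<lambda>j. b j \<alpha>) = (\<Sum>j\<in>UNIV. norm (remainder_coeff (c j) b \<alpha>))"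
    using b \<alpha>(1) unfolding shifted_norm_def l1_norm_def solves_recursion_def by simp
  moreover have "\<epsilon> * coeff_norm b \<alpha> \<le> shifted_norm (linear_part c) (tpow q \<alpha>) (\<lambda>j. b j \<alpha>)"
    using \<epsilon> unfolding coeff_norm_def by blast
  ultimately show ?thesis
    by linarith
qed

lemma majorant_sum_Suc_le:
  fixes c :: "'n::finite \<Rightarrow> ('m::finite \<Rightarrow> nat) \<Rightarrow> ('n \<Rightarrow> nat) \<Rightarrow> complex" and M s x :: real
  assumes b: "solves_recursion q c b"
    and \<epsilon>: "0 < \<epsilon>" "\<forall>\<alpha>. \<alpha> \<noteq> mi_zero \<longrightarrow> (\<forall>v. \<epsilon> * l1_norm v \<le> shifted_norm (linear_part c) (tpow q \<alpha>) v)"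
    and c: "\<forall>j \<beta> \<gamma>. norm (c j \<beta> \<gamma>) \<le> M * s ^ (total_deg \<beta> + total_deg \<gamma>)"
    and M: "0 \<le> M" and s: "0 \<le> s" and x: "0 \<le> x" "s * x \<le> 1/2"
    and small: "s * majorant_sum b x N \<le> 1/2"
  shows "majorant_sum b x (Suc N) \<le> CARD('n) * M / \<epsilon> * 2 ^ (CARD('m) + CARD('n)) *
           (4 * (s * majorant_sum b x N)\<^sup>2 + 2 * (s * x))"
proof -
  let ?P = "\<lambda>\<beta>. if total_deg \<beta> < Suc N then coeff_norm b \<beta> else 0"
  let ?RM = "remainder_majorant (\<lambda>\<beta> (\<gamma> :: 'n \<Rightarrow> nat). M * s ^ (total_deg \<beta> + total_deg \<gamma>)) ?P"
  have P: "0 \<le> ?P \<beta>" for \<beta>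
    by (simp add: coeff_norm_nonneg)
  have "coeff_norm b \<alpha> \<le> CARD('n) / \<epsilon> * ?RM \<alpha>" if "total_deg \<alpha> \<le> Suc N" for \<alpha>
  proof (cases "\<alpha> = mi_zero")
    case True
    then have "coeff_norm b \<alpha> = 0"
      using b unfolding solves_recursion_def coeff_norm_def l1_norm_def by simp
    then show ?thesis
      using \<epsilon>(1) M s P by (simp add: remainder_majorant_nonneg)
  next
    case False
    have H: "\<epsilon> * coeff_norm b \<alpha> \<le> CARD('n) * ?RM \<alpha>"
      using \<epsilon>(2) False by (intro coeff_norm_le_remainder_majorant[OF b _ c False that]) blast
    have "(\<epsilon> * coeff_norm b \<alpha>) / \<epsilon> \<le> (CARD('n) * ?RM \<alpha>) / \<epsilon>"
      by (rule divide_right_mono[OF H]) (use \<epsilon>(1) in simp)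
    then show ?thesis
      using \<epsilon>(1) by simp
  qed
  then have "majorant_sum b x (Suc N) \<le> (\<Sum>\<alpha>\<in>deg_le (Suc N). CARD('n) / \<epsilon> * ?RM \<alpha> * x ^ total_deg \<alpha>)"
    unfolding majorant_sum_def using x by (intro sum_mono mult_right_mono) auto
  also have "\<dots> = CARD('n) / \<epsilon> * (\<Sum>\<alpha>\<in>deg_le (Suc N). ?RM \<alpha> * x ^ total_deg \<alpha>)"
    by (simp add: sum_distrib_left mult.assoc)
  also have "\<dots> \<le> CARD('n) / \<epsilon> * (M * (\<Sum>\<beta>\<in>deg_le (Suc N). \<Sum>\<gamma>\<in>deg_le (Suc N).
      if affine_index (\<beta> :: 'm \<Rightarrow> nat) (\<gamma> :: 'n \<Rightarrow> nat) then 0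
      else (s * x) ^ total_deg \<beta> * (s * (\<Sum>\<beta>\<in>deg_le (Suc N). ?P \<beta> * x ^ total_deg \<beta>)) ^ total_deg \<gamma>))"
    using weighted_sum_remainder_majorant_le[OF M s x(1) P] \<epsilon>(1) by (intro mult_left_mono) auto
  also have "(\<Sum>\<beta>\<in>deg_le (Suc N). ?P \<beta> * x ^ total_deg \<beta>) = majorant_sum b x N"
    unfolding majorant_sum_def
    by (rule sum.mono_neutral_cong_right) auto
  also have "CARD('n) / \<epsilon> * (M * (\<Sum>\<beta>\<in>deg_le (Suc N). \<Sum>\<gamma>\<in>deg_le (Suc N).
      if affine_index (\<beta> :: 'm \<Rightarrow> nat) (\<gamma> :: 'n \<Rightarrow> nat) then 0
      else (s * x) ^ total_deg \<beta> * (s * majorant_sum b x N) ^ total_deg \<gamma>))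
    \<le> CARD('n) / \<epsilon> * (M * ((4 * (s * majorant_sum b x N)\<^sup>2 + 2 * (s * x)) * 2 ^ (CARD('m) + CARD('n))))"
    using nonaffine_double_sum_le[of "s * x" "s * majorant_sum b x N" "Suc N"] \<epsilon>(1) M s x small
      majorant_sum_nonneg[OF x(1), of b N]
    by (intro mult_left_mono) auto
  finally show ?thesis
    by (simp add: mult_ac)
qed

text \<open>Choice of the radius: with \<open>T\<close> small the quadratic term, and with \<open>x\<close> small the linear
  term of the recursive estimate stay below \<open>T/2\<close>.\<close>

lemma small_parameters_exist:
  fixes C s :: real
  assumes C: "0 \<le> C" and s: "0 < s"
  shows "\<exists>x T. 0 < x \<and> 0 < T \<and> s * x \<le> 1/2 \<and> s * T \<le> 1/2 \<and>
           (\<forall>P. 0 \<le> P \<and> P \<le> T \<longrightarrow> C * (4 * (s * P)\<^sup>2 + 2 * (s * x)) \<le> T)"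
proof -
  define T where "T = min (1 / (2 * s)) (1 / (8 * C * s\<^sup>2 + 1))"
  define x where "x = min (1 / (2 * s)) (T / (4 * C * s + 1))"
  have pos: "0 < 8 * C * s\<^sup>2 + 1" "0 < 4 * C * s + 1"
    using C s by (simp_all add: add_nonneg_pos)
  have T: "0 < T" "s * T \<le> 1/2" "T * (8 * C * s\<^sup>2 + 1) \<le> 1"
  proof -
    show "0 < T"
      unfolding T_def using s pos by simp
    have "T \<le> 1 / (2 * s)" "T \<le> 1 / (8 * C * s\<^sup>2 + 1)"
      unfolding T_def by simp_all
    then show "s * T \<le> 1/2" "T * (8 * C * s\<^sup>2 + 1) \<le> 1"
      using s pos by (simp_all add: pos_le_divide_eq field_simps)
  qed
  have x: "0 < x" "s * x \<le> 1/2" "x * (4 * C * s + 1) \<le> T"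
  proof -
    show "0 < x"
      unfolding x_def using s pos T(1) by simp
    have "x \<le> 1 / (2 * s)" "x \<le> T / (4 * C * s + 1)"
      unfolding x_def by simp_all
    then show "s * x \<le> 1/2" "x * (4 * C * s + 1) \<le> T"
      using s pos by (simp_all add: pos_le_divide_eq field_simps)
  qed
  have "C * (4 * (s * P)\<^sup>2 + 2 * (s * x)) \<le> T" if "0 \<le> P" "P \<le> T" for P
  proof -
    have "C * (4 * (s * P)\<^sup>2) \<le> C * (4 * (s * T)\<^sup>2)"
      using that C s by (intro mult_left_mono power_mono) auto
    also have "\<dots> = (8 * C * s\<^sup>2 * T) * T / 2"
      by (simp add: power2_eq_square)
    also have "\<dots> \<le> 1 * T / 2"
    proof -
      have "8 * C * s\<^sup>2 * T + T \<le> 1"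
        using T(3) by (simp add: algebra_simps)
      then have "8 * C * s\<^sup>2 * T \<le> 1"
        using T(1) by linarith
      then show ?thesis
        using T(1) by (intro divide_right_mono mult_right_mono) auto
    qed
    finally have "C * (4 * (s * P)\<^sup>2) \<le> T / 2"
      by simp
    moreover have "C * (2 * (s * x)) \<le> T / 2"
      using x C s by (simp add: algebra_simps)
    ultimately show ?thesis
      by (simp add: distrib_left)
  qed
  with T x show ?thesis by blast
qed

lemma summable_on_polydisc_if_coeff_bound:
  fixes b :: "'n \<Rightarrow> ('m::finite \<Rightarrow> nat) \<Rightarrow> complex"
  assumes T: "0 \<le> T" and x: "0 < x" and bound: "\<And>\<alpha>. norm (b j \<alpha>) * x ^ total_deg \<alpha> \<le> T"
    and t: "\<forall>i. norm (t i) < x / 2"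
  shows "(\<lambda>\<alpha>. b j \<alpha> * tpow t \<alpha>) summable_on UNIV"
proof -
  have "(\<lambda>\<alpha>. norm (T * (1/2::real) ^ total_deg \<alpha>)) summable_on UNIV"
    using half_power_deg_summable[OF T] T by simp
  moreover have "norm (b j \<alpha> * tpow t \<alpha>) \<le> norm (T * (1/2::real) ^ total_deg \<alpha>)" for \<alpha>
  proof -
    have "norm (tpow t \<alpha>) \<le> (x / 2) ^ total_deg \<alpha>"
      using t by (intro norm_tpow_le) (auto intro: less_imp_le)
    then have "norm (b j \<alpha> * tpow t \<alpha>) \<le> norm (b j \<alpha>) * (x / 2) ^ total_deg \<alpha>"
      by (simp add: norm_mult mult_left_mono)
    also have "\<dots> = norm (b j \<alpha>) * x ^ total_deg \<alpha> * (1/2) ^ total_deg \<alpha>"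
      by (simp add: power_divide)
    also have "\<dots> \<le> T * (1/2) ^ total_deg \<alpha>"
      using bound by (intro mult_right_mono) auto
    finally show ?thesis
      using T by simp
  qed
  ultimately have "(\<lambda>\<alpha>. norm (b j \<alpha> * tpow t \<alpha>)) summable_on UNIV"
    by (rule Infinite_Sum.abs_summable_on_comparison_test)
  then show ?thesis
    by (rule abs_summable_summable)
qed

lemma solves_recursion_summable:
  fixes c :: "'n::finite \<Rightarrow> ('m::finite \<Rightarrow> nat) \<Rightarrow> ('n \<Rightarrow> nat) \<Rightarrow> complex"
  assumes b: "solves_recursion q c b"
    and \<epsilon>: "0 < \<epsilon>" "\<forall>\<alpha>. \<alpha> \<noteq> mi_zero \<longrightarrow> (\<forall>v. \<epsilon> * l1_norm v \<le> shifted_norm (linear_part c) (tpow q \<alpha>) v)"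
    and c: "\<forall>j \<beta> \<gamma>. norm (c j \<beta> \<gamma>) \<le> M * s ^ (total_deg \<beta> + total_deg \<gamma>)"
    and M: "0 \<le> M" and s: "0 < s"
  shows "\<exists>\<rho>>0. \<forall>t. (\<forall>i. norm (t i) < \<rho>) \<longrightarrow> (\<forall>j. (\<lambda>\<alpha>. b j \<alpha> * tpow t \<alpha>) summable_on UNIV)"
proof -
  define C where "C = CARD('n) * M / \<epsilon> * 2 ^ (CARD('m) + CARD('n))"
  have "0 \<le> C"
    unfolding C_def using M \<epsilon>(1) by simp
  then obtain x T where x: "0 < x" "s * x \<le> 1/2" and T: "0 < T" "s * T \<le> 1/2"
    and fix_T: "\<And>P. 0 \<le> P \<Longrightarrow> P \<le> T \<Longrightarrow> C * (4 * (s * P)\<^sup>2 + 2 * (s * x)) \<le> T"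
    using small_parameters_exist[OF _ s] by blast
  have bounded: "majorant_sum b x N \<le> T" for N
  proof (induction N)
    case 0
    have "majorant_sum b x 0 = coeff_norm b mi_zero"
      unfolding majorant_sum_def by (simp add: total_deg_eq_0_iff)
    also have "\<dots> = 0"
      using b unfolding solves_recursion_def coeff_norm_def l1_norm_def by simp
    finally show ?case
      using T by simp
  next
    case (Suc N)
    have "s * majorant_sum b x N \<le> 1/2"
      using mult_left_mono[OF Suc.IH, of s] T(2) s by linarith
    then have "majorant_sum b x (Suc N) \<le> C * (4 * (s * majorant_sum b x N)\<^sup>2 + 2 * (s * x))"
      unfolding C_def using majorant_sum_Suc_le[OF b \<epsilon> c M less_imp_le[OF s] _ x(2)] x by simp
    also have "\<dots> \<le> T"
      using fix_T[OF majorant_sum_nonneg[OF less_imp_le[OF x(1)]] Suc.IH] .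
    finally show ?case .
  qed
  have coeff_bound: "norm (b j \<alpha>) * x ^ total_deg \<alpha> \<le> T" for j \<alpha>
    using norm_coeff_le_majorant_sum[OF less_imp_le[OF x(1)]] bounded by (rule order.trans)
  show ?thesis
  proof (intro exI[of _ "x/2"] conjI allI impI)
    fix t :: "'m \<Rightarrow> complex" and j
    assume "\<forall>i. norm (t i) < x/2"
    then show "(\<lambda>\<alpha>. b j \<alpha> * tpow t \<alpha>) summable_on UNIV"
      using T(1) by (intro summable_on_polydisc_if_coeff_bound[OF _ x(1) coeff_bound]) auto
  qed (use x in simp)
qed

theorem mainTheorem10:
  fixes q :: "'m::finite \<Rightarrow> complex"
    and H :: "'n::finite \<Rightarrow> ('m \<Rightarrow> complex) \<Rightarrow> ('n \<Rightarrow> complex) \<Rightarrow> complex"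
    and c :: "'n \<Rightarrow> ('m \<Rightarrow> nat) \<Rightarrow> ('n \<Rightarrow> nat) \<Rightarrow> complex"
    and Y :: "'n \<Rightarrow> complex" and r :: real
  assumes q_nz: "\<forall>i. q i \<noteq> 0"
    and hol: "\<forall>j. power_series_at (H j) (c j) Y r"
    and fix0: "\<forall>j. H j (\<lambda>_. 0) Y = Y j"
    and nonres: "\<forall>\<mu>. is_eigenvalue (jacobian_y H Y) \<mu> \<longrightarrow> \<mu> \<notin> Qset q"
  shows "(\<exists>!b. formal_solution q c Y b) \<and>
         ((\<forall>\<mu>. is_eigenvalue (jacobian_y H Y) \<mu> \<longrightarrow> \<not> (\<mu> islimpt Qset q)) \<longrightarrow>
           (\<forall>b. formal_solution q c Y b \<longrightarrow>
              (\<exists>\<rho>>0. \<forall>t. (\<forall>i. norm (t i) < \<rho>) \<longrightarrow>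
                 (\<forall>j. (\<lambda>\<alpha>. b j \<alpha> * tpow t \<alpha>) summable_on UNIV))))"
proof -
  have c00: "c j mi_zero mi_zero = Y j" for j
    using power_series_at_constant_coeff[OF hol[rule_format, of j]] fix0 by simp
  have jac: "jacobian_y H Y = linear_part c"
    using power_series_at_partial_deriv hol unfolding jacobian_y_def linear_part_def by (intro ext) blast
  have nonresonant: "\<not> is_eigenvalue (linear_part c) (tpow q \<alpha>)" if "\<alpha> \<noteq> mi_zero" for \<alpha>
    using nonres that unfolding jac Qset_def by blast
  have "\<exists>\<rho>>0. \<forall>t. (\<forall>i. norm (t i) < \<rho>) \<longrightarrow> (\<forall>j. (\<lambda>\<alpha>. b j \<alpha> * tpow t \<alpha>) summable_on UNIV)"
    if no_limit: "\<forall>\<mu>. is_eigenvalue (jacobian_y H Y) \<mu> \<longrightarrow> \<not> \<mu> islimpt Qset q"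
      and b: "formal_solution q c Y b" for b
  proof -
    have "\<mu> \<notin> closure (Qset q)" if "is_eigenvalue (linear_part c) \<mu>" for \<mu>
      using no_limit nonres that unfolding jac closure_def by blast
    then obtain \<epsilon> where "0 < \<epsilon>" "\<forall>w\<in>Qset q. \<forall>v. \<epsilon> * l1_norm v \<le> shifted_norm (linear_part c) w v"
      using shifted_norm_uniform_lower_bound by blast
    moreover obtain M where "0 \<le> M" "\<forall>j \<beta> \<gamma>. norm (c j \<beta> \<gamma>) \<le> M * (2/r) ^ (total_deg \<beta> + total_deg \<gamma>)"
      using power_series_at_family_coeff_bound[OF hol] by blast
    moreover have "0 < 2/r"
      using power_series_at_pos[OF hol[rule_format, of undefined]] by simp
    ultimately show ?thesis
      using b solves_recursion_summable[of q c b \<epsilon> M "2/r"]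
      unfolding formal_solution_iff_solves_recursion[of c Y, OF c00] Qset_def by blast
  qed
  then show ?thesis
    using formal_solution_ex1[OF c00 nonresonant] by blast
qed

end
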